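(* Let $L$ be a finite unramified extension of $\mathbb Q_\ell$ with ring of integers $S$. Let $P\in S[t]$ be monic of degree $2$ without multiple roots, with $P\equiv t^2\pmod\ell$; let $R=S[t]/P(t)S[t]$, $x$ the image of $t$, and $V=(L[t]/P(t)L[t])^r$ for an integer $r\ge1$. Let $N$ be a nilpotent $2r\times 2r$ matrix over $S/\ell S$. Then there exists an $x$-stable $S$-lattice $T\subset V$ (of rank $2r$) such that $x$ acts on $T/\ell T$ with matrix $N$ in some basis if and only if $\mathrm{Np}(P^r)$ lies on or above $\mathrm{Hp}(N)$ and all slopes of $\mathrm{Hp}(N)$ are equal to $1/2$ or $1$.
   Context: Young polygon $\mathrm{Hp}(N)$ of a nilpotent $d\times d$ matrix with Jordan block sizes $m_1\ge\dots\ge m_r$: piecewise linear function on $[0,d]$ with vertices $(\sum_{j\le i}m_j,i)$; its slopes are $1/m_i$. Newton polygon $\mathrm{Np}(Q)$ of $Q=\sum_{i=0}^d Q_it^{d-i}$: largest convex function $\phi$ on $[0,d]$ with $\phi(i)\le\nu(Q_i)$, where $\nu(\ell)=1$. "On or above" means pointwise $\ge$. *)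

theory Defs
  imports "HOL-Computational_Algebra.Computational_Algebra" "HOL-Analysis.Analysis"
begin

text \<open>A valuation v on the nonzero elements of a field 'k (the value at 0 is irrelevant,
  0 is treated as having valuation +infinity everywhere below).\<close>

definition inS :: "('k::field \<Rightarrow> int) \<Rightarrow> 'k \<Rightarrow> bool" where
  "inS v a \<longleftrightarrow> a = 0 \<or> v a \<ge> 0"

definition inlS :: "nat \<Rightarrow> ('k::field \<Rightarrow> int) \<Rightarrow> 'k \<Rightarrow> bool" where
  "inlS l v a \<longleftrightarrow> (\<exists>s. inS v s \<and> a = of_nat l * s)"

text \<open>(K, v) is a complete discretely valued field, v normalized with v(l) = 1 (so l is a
  uniformizer: unramified), with finite residue field S / l S.  Up to isomorphism these
  are exactly the finite unramified extensions of Q_l with their normalized valuation.\<close>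
definition unram_ext_Ql :: "nat \<Rightarrow> ('k::field \<Rightarrow> int) \<Rightarrow> bool" where
  "unram_ext_Ql l v \<longleftrightarrow>
     prime l \<and>
     (\<forall>a b. a \<noteq> 0 \<longrightarrow> b \<noteq> 0 \<longrightarrow> v (a * b) = v a + v b) \<and>
     (\<forall>a b. a \<noteq> 0 \<longrightarrow> b \<noteq> 0 \<longrightarrow> a + b \<noteq> 0 \<longrightarrow> v (a + b) \<ge> min (v a) (v b)) \<and>
     (of_nat l :: 'k) \<noteq> 0 \<and> v (of_nat l) = 1 \<and>
     (\<forall>f :: nat \<Rightarrow> 'k. (\<forall>n::int. \<exists>M. \<forall>i\<ge>M. \<forall>j\<ge>M. f i = f j \<or> v (f i - f j) \<ge> n)
        \<longrightarrow> (\<exists>a. \<forall>n::int. \<exists>M. \<forall>i\<ge>M. f i = a \<or> v (f i - a) \<ge> n)) \<and>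
     (\<exists>F. finite F \<and> F \<subseteq> {a. inS v a} \<and> (\<forall>a. inS v a \<longrightarrow> (\<exists>b\<in>F. inlS l v (a - b))))"

text \<open>Elements of V: r-tuples (indexed 0..r-1, zero beyond) of canonical representatives
  (degree < degree P) of L[t]/P.\<close>
definition Vsp :: "'k::field poly \<Rightarrow> nat \<Rightarrow> (nat \<Rightarrow> 'k poly) set" where
  "Vsp P r = {w. \<forall>i. (i < r \<longrightarrow> degree (w i) < degree P) \<and> (r \<le> i \<longrightarrow> w i = 0)}"

definition xact :: "'k::field poly \<Rightarrow> (nat \<Rightarrow> 'k poly) \<Rightarrow> (nat \<Rightarrow> 'k poly)" where
  "xact P w = (\<lambda>i. ([:0, 1:] * w i) mod P)"

definition vscale :: "'k::field \<Rightarrow> (nat \<Rightarrow> 'k poly) \<Rightarrow> (nat \<Rightarrow> 'k poly)" where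
  "vscale c w = (\<lambda>i. smult c (w i))"

definition vdiff :: "(nat \<Rightarrow> 'k::field poly) \<Rightarrow> (nat \<Rightarrow> 'k poly) \<Rightarrow> (nat \<Rightarrow> 'k poly)" where
  "vdiff w u = (\<lambda>i. w i - u i)"

definition lcomb :: "(nat \<Rightarrow> 'k::field) \<Rightarrow> (nat \<Rightarrow> nat \<Rightarrow> 'k poly) \<Rightarrow> nat \<Rightarrow> (nat \<Rightarrow> 'k poly)" where
  "lcomb c b n = (\<lambda>i. \<Sum>j<n. smult (c j) (b j i))"

text \<open>T is an S-lattice in V of rank 2r: the S-span of an L-basis of V (of size 2r).\<close>
definition is_lattice :: "('k::field \<Rightarrow> int) \<Rightarrow> 'k poly \<Rightarrow> nat \<Rightarrow> (nat \<Rightarrow> 'k poly) set \<Rightarrow> bool" where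
  "is_lattice v P r T \<longleftrightarrow>
     (\<exists>b. (\<forall>j<2*r. b j \<in> Vsp P r) \<and>
          (\<forall>w\<in>Vsp P r. \<exists>!c. (\<forall>j\<ge>2*r. c j = 0) \<and> w = lcomb c b (2*r)) \<and>
          T = {lcomb c b (2*r) | c. \<forall>j<2*r. inS v (c j)})"

definition x_stable :: "'k::field poly \<Rightarrow> (nat \<Rightarrow> 'k poly) set \<Rightarrow> bool" where
  "x_stable P T \<longleftrightarrow> (\<forall>w\<in>T. xact P w \<in> T)"

definition lT :: "nat \<Rightarrow> (nat \<Rightarrow> 'k::field poly) set \<Rightarrow> (nat \<Rightarrow> 'k poly) set" where
  "lT l T = vscale (of_nat l) ` T"

text \<open>e_0..e_{n-1} in T whose images form an (S/lS)-basis of T/lT\<close>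
definition quot_basis :: "nat \<Rightarrow> ('k::field \<Rightarrow> int) \<Rightarrow> (nat \<Rightarrow> 'k poly) set \<Rightarrow> nat
     \<Rightarrow> (nat \<Rightarrow> nat \<Rightarrow> 'k poly) \<Rightarrow> bool" where
  "quot_basis l v T n e \<longleftrightarrow>
     (\<forall>j<n. e j \<in> T) \<and>
     (\<forall>w\<in>T. \<exists>c. (\<forall>j<n. inS v (c j)) \<and> vdiff w (lcomb c e n) \<in> lT l T) \<and>
     (\<forall>c. (\<forall>j<n. inS v (c j)) \<and> lcomb c e n \<in> lT l T \<longrightarrow> (\<forall>j<n. inlS l v (c j)))"

text \<open>x acts on T/lT with matrix N (entries representatives in S of elements of S/lS)
  w.r.t. the basis e: x e_j = sum_i N_ij e_i  mod lT.\<close>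
definition acts_by_matrix :: "nat \<Rightarrow> 'k::field poly \<Rightarrow> (nat \<Rightarrow> 'k poly) set \<Rightarrow> nat
     \<Rightarrow> (nat \<Rightarrow> nat \<Rightarrow> 'k poly) \<Rightarrow> (nat \<Rightarrow> nat \<Rightarrow> 'k) \<Rightarrow> bool" where
  "acts_by_matrix l P T n e N \<longleftrightarrow>
     (\<forall>j<n. vdiff (xact P (e j)) (lcomb (\<lambda>i. N i j) e n) \<in> lT l T)"

definition matmul :: "nat \<Rightarrow> (nat \<Rightarrow> nat \<Rightarrow> 'k::field) \<Rightarrow> (nat \<Rightarrow> nat \<Rightarrow> 'k) \<Rightarrow> (nat \<Rightarrow> nat \<Rightarrow> 'k)" where
  "matmul n A B = (\<lambda>i j. \<Sum>k<n. A i k * B k j)"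

fun matpow :: "nat \<Rightarrow> (nat \<Rightarrow> nat \<Rightarrow> 'k::field) \<Rightarrow> nat \<Rightarrow> (nat \<Rightarrow> nat \<Rightarrow> 'k)" where
  "matpow n A 0 = (\<lambda>i j. if i = j then 1 else 0)"
| "matpow n A (Suc k) = matmul n A (matpow n A k)"

definition S_matrix :: "('k::field \<Rightarrow> int) \<Rightarrow> nat \<Rightarrow> (nat \<Rightarrow> nat \<Rightarrow> 'k) \<Rightarrow> bool" where
  "S_matrix v n A \<longleftrightarrow> (\<forall>i<n. \<forall>j<n. inS v (A i j))"

definition mat_cong :: "nat \<Rightarrow> ('k::field \<Rightarrow> int) \<Rightarrow> nat \<Rightarrow> (nat \<Rightarrow> nat \<Rightarrow> 'k) \<Rightarrow> (nat \<Rightarrow> nat \<Rightarrow> 'k) \<Rightarrow> bool" where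
  "mat_cong l v n A B \<longleftrightarrow> (\<forall>i<n. \<forall>j<n. inlS l v (A i j - B i j))"

definition nilpotent_mod :: "nat \<Rightarrow> ('k::field \<Rightarrow> int) \<Rightarrow> nat \<Rightarrow> (nat \<Rightarrow> nat \<Rightarrow> 'k) \<Rightarrow> bool" where
  "nilpotent_mod l v n N \<longleftrightarrow> (\<exists>k. mat_cong l v n (matpow n N k) (\<lambda>i j. 0))"

definition block_starts :: "nat list \<Rightarrow> nat set" where
  "block_starts ms = {sum_list (take k ms) | k. k \<le> length ms}"

definition jordan_nil :: "nat list \<Rightarrow> (nat \<Rightarrow> nat \<Rightarrow> 'k::field)" where
  "jordan_nil ms = (\<lambda>i j. if j = Suc i \<and> j \<notin> block_starts ms then 1 else 0)"

text \<open>ms = (m_1 >= ... >= m_s) is the list of Jordan block sizes of N over S/lS.\<close>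
definition jordan_type :: "nat \<Rightarrow> ('k::field \<Rightarrow> int) \<Rightarrow> nat \<Rightarrow> (nat \<Rightarrow> nat \<Rightarrow> 'k) \<Rightarrow> nat list \<Rightarrow> bool" where
  "jordan_type l v n N ms \<longleftrightarrow>
     sorted_wrt (\<ge>) ms \<and> (\<forall>m\<in>set ms. 0 < m) \<and> sum_list ms = n \<and>
     (\<exists>A B. S_matrix v n A \<and> S_matrix v n B \<and>
        mat_cong l v n (matmul n A B) (matpow n A 0) \<and>
        mat_cong l v n (matmul n (matmul n A N) B) (jordan_nil ms))"

text \<open>Piecewise linear function with vertices (m_1+...+m_i, i): block k contributes
  the clamp of (y - (m_1+...+m_k))/m_{k+1} to [0,1].\<close>
definition Hp :: "nat list \<Rightarrow> real \<Rightarrow> real" where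
  "Hp ms y = (\<Sum>k<length ms.
      min (max (y - real (sum_list (take k ms))) 0) (real (ms ! k)) / real (ms ! k))"

text \<open>Newton polygon of Q = sum_{i=0}^d Q_i t^(d-i): largest convex function phi on [0,d]
  with phi(i) <= nu(Q_i) (no condition when Q_i = 0, nu(0) = infinity); ereal-valued.\<close>
definition Np :: "('k::field \<Rightarrow> int) \<Rightarrow> 'k poly \<Rightarrow> nat \<Rightarrow> real \<Rightarrow> ereal" where
  "Np v Q d y = (SUP \<phi> \<in> {\<phi> :: real \<Rightarrow> real. convex_on {0..real d} \<phi> \<and>
        (\<forall>i\<le>d. coeff Q (d - i) \<noteq> 0 \<longrightarrow> \<phi> (real i) \<le> real_of_int (v (coeff Q (d - i))))}.
      ereal (\<phi> y))"

end

theory Submission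
  imports Defs
begin

(*
  Write P = t^2 + a t + b with l | a and l | b, and let x act on V = (L[t]/P)^r.
  Since x^2 = -a x - b, on every x-stable lattice T the operator x^2 maps T into l T:
  the matrix N of x on T/lT is square-zero, so over S/lS it is conjugate to the
  Jordan matrix with p blocks of size 2 and q blocks of size 1 (2p + q = 2r).
  The Newton polygon of P^r is the line y/2 when v(b) = 1, and lies above the line y
  when v(b) >= 2 (or b = 0).

  Necessity: if v(b) = 1, every vector killed by x modulo l is in the image of x
  modulo l, which forces q = 0 and Hp(N) = y/2 <= Np; otherwise Hp(N) <= y <= Np.
  Sufficiency: the conditions force q = 0 or v(b) >= 2, and the explicit lattice
  spanned by p copies of {x, 1} and q copies of {1, x/l} realises the Jordan matrix;
  the required basis is then obtained by transporting with the conjugating matrix.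
*)

lemma sum_2p: "(\<Sum>t<2*(p::nat). g t) = (\<Sum>j<p. g (2*j) + g (2*j+1))"
  by (induction p) (simp_all add: add.assoc)

lemma sum_lessThan_split: "(m::nat) \<le> k \<Longrightarrow> (\<Sum>t<k. g t) = (\<Sum>t<m. g t) + (\<Sum>t\<in>{m..<k}. g t)"
  using sum.atLeastLessThan_concat[of 0 m k g] by (simp add: atLeast0LessThan)

locale valued_field =
  fixes l :: nat and v :: "'k::field \<Rightarrow> int"
  assumes vmult: "a \<noteq> 0 \<Longrightarrow> b \<noteq> 0 \<Longrightarrow> v (a * b) = v a + v b"
    and vultra: "a \<noteq> 0 \<Longrightarrow> b \<noteq> 0 \<Longrightarrow> a + b \<noteq> 0 \<Longrightarrow> v (a + b) \<ge> min (v a) (v b)"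
    and l0: "(of_nat l :: 'k) \<noteq> 0" and vl: "v (of_nat l) = 1"
begin

text \<open>vge n a: a has valuation at least n (0 has every valuation).
  So vge 0 describes S and vge 1 describes l S.\<close>

definition vge :: "int \<Rightarrow> 'k \<Rightarrow> bool" where
  "vge n a \<longleftrightarrow> a = 0 \<or> v a \<ge> n"

lemma v1[simp]: "v 1 = 0"
  using vmult[of 1 1] by simp

lemma vm1: "v (-1) = 0"
  using vmult[of "-1" "-1"] by simp

lemma vneg[simp]: "v (- a) = v a"
proof (cases "a = 0")
  case False
  then show ?thesis using vmult[of "-1" a] vm1 by simp
qed simp

lemma vinv: "a \<noteq> 0 \<Longrightarrow> v (inverse a) = - v a"
  using vmult[of a "inverse a"] by simp

lemma vpow: "a \<noteq> 0 \<Longrightarrow> v (a ^ k) = int k * v a"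
  by (induction k) (auto simp: vmult distrib_right)

lemma vge_0[simp]: "vge n 0" by (simp add: vge_def)
lemma vge_1[simp]: "vge n 1 \<longleftrightarrow> n \<le> 0" by (simp add: vge_def)

lemma vge_add: "vge n a \<Longrightarrow> vge n b \<Longrightarrow> vge n (a + b)"
  unfolding vge_def using vultra[of a b] by force

lemma vge_neg[simp]: "vge n (- a) \<longleftrightarrow> vge n a"
  unfolding vge_def by auto

lemma vge_diff: "vge n a \<Longrightarrow> vge n b \<Longrightarrow> vge n (a - b)"
  using vge_add[of n a "-b"] by simp

lemma vge_mult: "vge n a \<Longrightarrow> vge m b \<Longrightarrow> vge (n + m) (a * b)"
  unfolding vge_def using vmult[of a b] by (cases "a = 0"; cases "b = 0") auto

lemma vge_mult0: "vge 0 a \<Longrightarrow> vge n b \<Longrightarrow> vge n (a * b)"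
  using vge_mult[of 0 a n b] by simp

lemma vge_mult0': "vge n a \<Longrightarrow> vge 0 b \<Longrightarrow> vge n (a * b)"
  using vge_mult[of n a 0 b] by simp

lemma vge_mono: "vge n a \<Longrightarrow> m \<le> n \<Longrightarrow> vge m a"
  unfolding vge_def by auto

lemma vge_sum: "(\<And>j. j \<in> J \<Longrightarrow> vge n (f j)) \<Longrightarrow> vge n (\<Sum>j\<in>J. f j)"
proof (induction J rule: infinite_finite_induct)
  case (insert x F)
  then have "vge n (f x)" "vge n (\<Sum>j\<in>F. f j)" by auto
  then show ?case using insert(1,2) by (simp add: vge_add)
qed simp_all

lemma vge_l: "vge 1 (of_nat l)" using vl unfolding vge_def by simp

lemma vge_unit: "vge 0 a \<Longrightarrow> \<not> vge 1 a \<Longrightarrow> a \<noteq> 0 \<and> v a = 0"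
  unfolding vge_def by auto

lemma vge_inv_unit:
  assumes "vge 0 a" "\<not> vge 1 a" shows "vge 0 (inverse a)"
proof -
  have "a \<noteq> 0" "v a = 0" using vge_unit[OF assms] by auto
  then have "v (inverse a) = 0" using vinv[of a] by simp
  then show ?thesis unfolding vge_def by simp
qed

lemma vge_div_unit: "vge n b \<Longrightarrow> vge 0 a \<Longrightarrow> \<not> vge 1 a \<Longrightarrow> vge n (b / a)"
  using vge_mult0'[of n b "inverse a"] vge_inv_unit[of a] by (simp add: divide_inverse)

lemma vge_div_l: assumes "vge (n + 1) a" shows "vge n (a / of_nat l)"
proof (cases "a = 0")
  case False
  have "v (inverse (of_nat l)) = -1" using vinv[OF l0] vl by simp
  moreover have "inverse (of_nat l) \<noteq> (0::'k)" using l0 by simp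
  ultimately have "v (a / of_nat l) = v a - 1" using vmult[OF False, of "inverse (of_nat l)"]
    by (simp add: divide_inverse)
  then show ?thesis using assms False unfolding vge_def by simp
qed (simp add: vge_def)

lemma vge_l_mult: "vge n a \<Longrightarrow> vge (n + 1) (of_nat l * a)"
  using vge_mult[OF vge_l, of n a] by (simp add: add.commute)

lemma inS_iff[simp]: "inS v a \<longleftrightarrow> vge 0 a"
  by (simp add: inS_def vge_def)

lemma inlS_iff[simp]: "inlS l v a \<longleftrightarrow> vge 1 a"
proof
  assume "inlS l v a"
  then obtain s where "vge 0 s" "a = of_nat l * s" by (auto simp: inlS_def)
  then show "vge 1 a" using vge_l_mult[of 0 s] by simp
next
  assume a: "vge 1 a"
  have "a = of_nat l * (a / of_nat l)" using l0 by simp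
  moreover have "vge 0 (a / of_nat l)" using vge_div_l[of 0 a] a by simp
  ultimately show "inlS l v a" unfolding inlS_def inS_iff by blast
qed

end

lemma valued_field_of_unram:
  assumes "unram_ext_Ql l v" shows "valued_field l v"
  using assms unfolding unram_ext_Ql_def by unfold_locales blast+

section \<open>Linear algebra over S modulo l\<close>

text \<open>Vectors and matrices have entries in the field, indexed by naturals; only the
  first n coordinates matter.  Reduction modulo l is never formed explicitly: a vector
  is zero in (S/lS)^n when all its first n entries lie in l S.\<close>

context valued_field
begin

definition zero_mod :: "nat \<Rightarrow> (nat \<Rightarrow> 'k) \<Rightarrow> bool" where
  "zero_mod n u \<longleftrightarrow> (\<forall>i<n. vge 1 (u i))"

definition Svec :: "nat \<Rightarrow> (nat \<Rightarrow> 'k) \<Rightarrow> bool" where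
  "Svec n u \<longleftrightarrow> (\<forall>i<n. vge 0 (u i))"

text \<open>The family (vs j) for j in J has linearly independent reductions in (S/lS)^n.\<close>

definition indep :: "nat \<Rightarrow> nat set \<Rightarrow> (nat \<Rightarrow> nat \<Rightarrow> 'k) \<Rightarrow> bool" where
  "indep n J vs \<longleftrightarrow> (\<forall>c. (\<forall>j\<in>J. vge 0 (c j)) \<longrightarrow> zero_mod n (\<lambda>i. \<Sum>j\<in>J. c j * vs j i)
       \<longrightarrow> (\<forall>j\<in>J. vge 1 (c j)))"

text \<open>The reduction of z lies in the span of the reductions of the family.\<close>

definition inspan :: "nat \<Rightarrow> nat set \<Rightarrow> (nat \<Rightarrow> nat \<Rightarrow> 'k) \<Rightarrow> (nat \<Rightarrow> 'k) \<Rightarrow> bool" where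
  "inspan n J vs z \<longleftrightarrow> (\<exists>c. (\<forall>j\<in>J. vge 0 (c j)) \<and> zero_mod n (\<lambda>i. z i - (\<Sum>j\<in>J. c j * vs j i)))"

lemma indep_empty: "indep n {} vs" unfolding indep_def by simp

lemma indep_cong: "(\<And>j. j \<in> J \<Longrightarrow> vs j = vs' j) \<Longrightarrow> indep n J vs = indep n J vs'"
  unfolding indep_def by (simp cong: sum.cong)

lemma indep_drop_row:
  assumes ind: "indep (Suc n) J vs" and last: "\<forall>j\<in>J. vge 1 (vs j n)"
  shows "indep n J vs"
  unfolding indep_def
proof (intro allI impI)
  fix c assume c: "\<forall>j\<in>J. vge 0 (c j)" and z: "zero_mod n (\<lambda>i. \<Sum>j\<in>J. c j * vs j i)"
  have "vge 1 (\<Sum>j\<in>J. c j * vs j n)" using c last by (auto intro!: vge_sum vge_mult0)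
  then have "zero_mod (Suc n) (\<lambda>i. \<Sum>j\<in>J. c j * vs j i)"
    using z unfolding zero_mod_def by (auto simp: less_Suc_eq)
  then show "\<forall>j\<in>J. vge 1 (c j)" using ind c unfolding indep_def by blast
qed

text \<open>Rank bound, second reduction: Gaussian elimination with a pivot vs k whose last
  coordinate is a unit kills the last coordinate and keeps the others independent.\<close>

lemma indep_eliminate_pivot:
  assumes fin: "finite J" and k: "k \<in> J" and piv: "\<not> vge 1 (vs k n)"
    and S: "\<forall>j\<in>J. Svec (Suc n) (vs j)" and ind: "indep (Suc n) J vs"
  shows "indep n (J - {k}) (\<lambda>j i. vs j i - vs j n / vs k n * vs k i)"
  unfolding indep_def
proof (intro allI impI)
  define mu where "mu j = vs j n / vs k n" for j
  fix c assume c: "\<forall>j\<in>J - {k}. vge 0 (c j)"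
    and z: "zero_mod n (\<lambda>i. \<Sum>j\<in>J - {k}. c j * (vs j i - vs j n / vs k n * vs k i))"
  have mu: "vge 0 (mu j)" if "j \<in> J" for j
    unfolding mu_def using S that k by (intro vge_div_unit piv) (auto simp: Svec_def)
  define c' where "c' = c(k := - (\<Sum>j\<in>J - {k}. c j * mu j))"
  have c'S: "\<forall>j\<in>J. vge 0 (c' j)"
    using c mu unfolding c'_def by (auto intro!: vge_sum vge_mult0)
  have eq: "(\<Sum>j\<in>J. c' j * vs j i) = (\<Sum>j\<in>J - {k}. c j * (vs j i - mu j * vs k i))" for i
  proof -
    have "(\<Sum>j\<in>J. c' j * vs j i) = c' k * vs k i + (\<Sum>j\<in>J - {k}. c' j * vs j i)"
      using sum.remove[OF fin k] by blast
    also have "(\<Sum>j\<in>J - {k}. c' j * vs j i) = (\<Sum>j\<in>J - {k}. c j * vs j i)"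
      by (rule sum.cong) (auto simp: c'_def)
    finally show ?thesis
      by (simp add: c'_def right_diff_distrib sum_subtractf sum_distrib_right mult.assoc)
  qed
  have "mu j * vs k n = vs j n" for j using piv unfolding mu_def vge_def by auto
  then have "zero_mod (Suc n) (\<lambda>i. \<Sum>j\<in>J. c' j * vs j i)"
    using z unfolding zero_mod_def eq mu_def by (auto simp: less_Suc_eq)
  then have "\<forall>j\<in>J. vge 1 (c' j)" using ind c'S unfolding indep_def by blast
  then show "\<forall>j\<in>J - {k}. vge 1 (c j)" unfolding c'_def by (metis DiffD1 DiffD2 fun_upd_other singletonI)
qed

lemma indep_card:
  assumes "finite J" "\<forall>j\<in>J. Svec n (vs j)" "indep n J vs"
  shows "card J \<le> n"
  using assms
proof (induction n arbitrary: J vs)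
  case 0
  have "\<forall>j\<in>J. vge 1 (1::'k)"
    using "0.prems"(3) unfolding indep_def by (auto simp: zero_mod_def dest!: spec[of _ "\<lambda>_. 1"])
  then show ?case by (simp add: "0.prems"(1))
next
  case (Suc n)
  show ?case
  proof (cases "\<forall>j\<in>J. vge 1 (vs j n)")
    case True
    have "card J \<le> n"
      using Suc.IH[OF Suc.prems(1) _ indep_drop_row[OF Suc.prems(3) True]] Suc.prems(2)
      by (simp add: Svec_def)
    then show ?thesis by simp
  next
    case False
    then obtain k where k: "k \<in> J" "\<not> vge 1 (vs k n)" by blast
    let ?ws = "\<lambda>j i. vs j i - vs j n / vs k n * vs k i"
    have "\<forall>j\<in>J - {k}. Svec n (?ws j)"
      using Suc.prems(2) k by (auto simp: Svec_def intro!: vge_diff vge_mult0 vge_div_unit)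
    then have "card (J - {k}) \<le> n"
      using Suc.IH[of "J - {k}" ?ws] Suc.prems indep_eliminate_pivot[OF Suc.prems(1) k _ Suc.prems(3)]
      by blast
    then show ?thesis using k(1) Suc.prems(1) by (simp add: card_Diff_singleton)
  qed
qed

lemma inspan_of_relation:
  assumes fin: "finite J" and c: "\<forall>j\<in>J. vge 0 (c j)" and ck0: "vge 0 ck" and unit: "\<not> vge 1 ck"
    and rel: "zero_mod n (\<lambda>i. ck * z i + (\<Sum>j\<in>J. c j * vs j i))"
  shows "inspan n J vs z"
  unfolding inspan_def
proof (intro exI conjI)
  show "\<forall>j\<in>J. vge 0 (- c j / ck)" using c by (auto intro!: vge_div_unit ck0 unit)
  have ne: "ck \<noteq> 0" using vge_unit[OF ck0 unit] by simp
  have "z i - (\<Sum>j\<in>J. - c j / ck * vs j i) = (ck * z i + (\<Sum>j\<in>J. c j * vs j i)) / ck" for i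
    using ne by (simp add: sum_divide_distrib[symmetric] sum_negf field_simps)
  then show "zero_mod n (\<lambda>i. z i - (\<Sum>j\<in>J. - c j / ck * vs j i))"
    using rel vge_div_unit[OF _ ck0 unit] unfolding zero_mod_def by simp
qed

lemma inspan_translate:
  assumes d: "\<forall>t\<in>J. vge 0 (d t)" and sp: "inspan n J vs (\<lambda>i. z i - (\<Sum>t\<in>J. d t * vs t i))"
  shows "inspan n J vs z"
proof -
  obtain c where c: "\<forall>t\<in>J. vge 0 (c t)"
      "zero_mod n (\<lambda>i. (z i - (\<Sum>t\<in>J. d t * vs t i)) - (\<Sum>t\<in>J. c t * vs t i))"
    using sp unfolding inspan_def by blast
  have eq: "(\<lambda>i. z i - (\<Sum>t\<in>J. (c t + d t) * vs t i))
      = (\<lambda>i. (z i - (\<Sum>t\<in>J. d t * vs t i)) - (\<Sum>t\<in>J. c t * vs t i))"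
    by (simp add: fun_eq_iff distrib_right sum.distrib algebra_simps)
  show ?thesis unfolding inspan_def
  proof (intro exI[of _ "\<lambda>t. c t + d t"] conjI)
    show "\<forall>t\<in>J. vge 0 (c t + d t)" using c(1) d by (auto intro!: vge_add)
    show "zero_mod n (\<lambda>i. z i - (\<Sum>t\<in>J. (c t + d t) * vs t i))" using c(2) by (simp only: eq)
  qed
qed

lemma indep_insert:
  assumes fin: "finite J" and kJ: "k \<notin> J" and ind: "indep n J vs"
    and ns: "\<not> inspan n J vs z" and zS: "Svec n z"
  shows "indep n (insert k J) (vs(k := z))"
  unfolding indep_def
proof (intro allI impI)
  fix c assume c: "\<forall>j\<in>insert k J. vge 0 (c j)"
    and z: "zero_mod n (\<lambda>i. \<Sum>j\<in>insert k J. c j * (vs(k := z)) j i)"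
  have "(\<Sum>j\<in>insert k J. c j * (vs(k := z)) j i) = c k * z i + (\<Sum>j\<in>J. c j * vs j i)" for i
  proof -
    have "(\<Sum>j\<in>J. c j * (vs(k := z)) j i) = (\<Sum>j\<in>J. c j * vs j i)"
      by (rule sum.cong) (use kJ in auto)
    then show ?thesis using fin kJ by simp
  qed
  then have rel: "zero_mod n (\<lambda>i. c k * z i + (\<Sum>j\<in>J. c j * vs j i))" using z by simp
  have ck: "vge 1 (c k)"
    using inspan_of_relation[OF fin _ _ _ rel] ns c by auto
  have "vge 1 (c k * z i)" if "i < n" for i using vge_mult0'[OF ck] zS that by (simp add: Svec_def)
  then have "zero_mod n (\<lambda>i. \<Sum>j\<in>J. c j * vs j i)"
    using rel unfolding zero_mod_def by (metis add_diff_cancel_left' vge_diff)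
  then have "\<forall>j\<in>J. vge 1 (c j)" using ind c unfolding indep_def by simp
  then show "\<forall>j\<in>insert k J. vge 1 (c j)" using ck by blast
qed

lemma indep_full_span:
  assumes ind: "indep n {..<n} vs" and vsS: "\<forall>j\<in>{..<n}. Svec n (vs j)" and z: "Svec n z"
  shows "inspan n {..<n} vs z"
proof (rule ccontr)
  assume "\<not> inspan n {..<n} vs z"
  then have "indep n (insert n {..<n}) (vs(n := z))" by (intro indep_insert ind z) auto
  moreover have "\<forall>j\<in>insert n {..<n}. Svec n ((vs(n := z)) j)" using vsS z by auto
  ultimately have "card (insert n {..<n}) \<le> n" by (intro indep_card) auto
  then show False by simp
qed

definition mv :: "nat \<Rightarrow> (nat \<Rightarrow> nat \<Rightarrow> 'k) \<Rightarrow> (nat \<Rightarrow> 'k) \<Rightarrow> (nat \<Rightarrow> 'k)" where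
  "mv K A c = (\<lambda>i. \<Sum>j<K. A i j * c j)"

definition Smat :: "nat \<Rightarrow> nat \<Rightarrow> (nat \<Rightarrow> nat \<Rightarrow> 'k) \<Rightarrow> bool" where
  "Smat R C A \<longleftrightarrow> (\<forall>i<R. \<forall>j<C. vge 0 (A i j))"

definition mcong :: "nat \<Rightarrow> nat \<Rightarrow> (nat \<Rightarrow> nat \<Rightarrow> 'k) \<Rightarrow> (nat \<Rightarrow> nat \<Rightarrow> 'k) \<Rightarrow> bool" where
  "mcong R C A B \<longleftrightarrow> (\<forall>i<R. \<forall>j<C. vge 1 (A i j - B i j))"

definition Imat :: "nat \<Rightarrow> nat \<Rightarrow> 'k" where
  "Imat i j = (if i = j then 1 else 0)"

lemma matmul_assoc: "matmul m (matmul k A B) C = matmul k A (matmul m B C)"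
  unfolding matmul_def
  by (auto simp: sum_distrib_left sum_distrib_right mult.assoc intro!: ext sum.swap)

lemma Smat_mult: "Smat R K A \<Longrightarrow> Smat K C B \<Longrightarrow> Smat R C (matmul K A B)"
  unfolding Smat_def matmul_def by (auto intro!: vge_sum vge_mult0)

lemma Smat_Imat[simp]: "Smat R C Imat" unfolding Smat_def Imat_def by simp

lemma mcong_refl[simp]: "mcong R C A A" unfolding mcong_def by simp

lemma mcong_sym: "mcong R C A B \<Longrightarrow> mcong R C B A"
  unfolding mcong_def using vge_neg by (metis minus_diff_eq)

lemma mcong_trans[trans]: "mcong R C A B \<Longrightarrow> mcong R C B D \<Longrightarrow> mcong R C A D"
  unfolding mcong_def using vge_add by (metis diff_add_cancel add_diff_eq)

lemma mcong_mult:
  assumes "Smat K C B" "Smat R K A'" "mcong R K A A'" "mcong K C B B'"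
  shows "mcong R C (matmul K A B) (matmul K A' B')"
  unfolding mcong_def
proof (intro allI impI)
  fix i j assume i: "i < R" and j: "j < C"
  have "matmul K A B i j - matmul K A' B' i j
      = (\<Sum>k<K. (A i k - A' i k) * B k j) + (\<Sum>k<K. A' i k * (B k j - B' k j))"
    unfolding matmul_def by (simp add: sum.distrib[symmetric] algebra_simps sum_subtractf[symmetric])
  moreover have "vge 1 (\<Sum>k<K. (A i k - A' i k) * B k j)"
    using assms i j unfolding Smat_def mcong_def by (auto intro!: vge_sum vge_mult0')
  moreover have "vge 1 (\<Sum>k<K. A' i k * (B k j - B' k j))"
    using assms i j unfolding Smat_def mcong_def by (auto intro!: vge_sum vge_mult0)
  ultimately show "vge 1 (matmul K A B i j - matmul K A' B' i j)" by (simp add: vge_add)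
qed

lemma mcong_mult_left:
  "Smat K C B \<Longrightarrow> Smat R K A' \<Longrightarrow> mcong R K A A' \<Longrightarrow> mcong R C (matmul K A B) (matmul K A' B)"
  using mcong_mult[of K C B R A' A B] by simp

lemma mcong_mult_right:
  "Smat K C B \<Longrightarrow> Smat R K A \<Longrightarrow> mcong K C B B' \<Longrightarrow> mcong R C (matmul K A B) (matmul K A B')"
  using mcong_mult[of K C B R A A B'] by simp

lemma matmul_Im_left_eq: "i < R \<Longrightarrow> matmul R Imat A i j = A i j"
proof -
  assume i: "i < R"
  have e: "(\<lambda>k. Imat i k * A k j) = (\<lambda>k. if k = i then A i j else 0)" by (auto simp: Imat_def)
  show ?thesis using i unfolding matmul_def e by simp
qed

lemma matmul_Im_right_eq: "j < C \<Longrightarrow> matmul C A Imat i j = A i j"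
proof -
  assume j: "j < C"
  have e: "(\<lambda>k. A i k * Imat k j) = (\<lambda>k. if k = j then A i j else 0)" by (auto simp: Imat_def)
  show ?thesis using j unfolding matmul_def e by simp
qed

lemma matmul_Im_left: "mcong R C (matmul R Imat A) A"
  unfolding mcong_def by (simp add: matmul_Im_left_eq)

lemma matmul_Im_right: "mcong R C (matmul C A Imat) A"
  unfolding mcong_def by (simp add: matmul_Im_right_eq)

lemma mv_mv: "mv n A (mv n B c) = mv n (matmul n A B) c"
  unfolding mv_def matmul_def
  by (auto simp: sum_distrib_left sum_distrib_right mult.assoc intro!: ext sum.swap)

lemma mv_sum: "mv n N (\<lambda>i. \<Sum>t\<in>J. c t * f t i) = (\<lambda>i. \<Sum>t\<in>J. c t * mv n N (f t) i)"
  unfolding mv_def by (auto simp: sum_distrib_left mult_ac intro!: ext sum.swap)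

lemma mv_add: "mv n N (\<lambda>i. a i + b i) = (\<lambda>i. mv n N a i + mv n N b i)"
  unfolding mv_def by (simp add: distrib_left sum.distrib)

lemma mv_diff: "mv n N (\<lambda>i. a i - b i) = (\<lambda>i. mv n N a i - mv n N b i)"
  unfolding mv_def by (simp add: right_diff_distrib sum_subtractf)

lemma mv_unit: "j < n \<Longrightarrow> mv n N (\<lambda>k. if k = j then 1 else 0) = (\<lambda>i. N i j)"
proof (rule ext)
  fix i assume j: "j < n"
  have e: "(\<lambda>k. N i k * (if k = j then 1 else 0)) = (\<lambda>k. if k = j then N i j else 0)" by auto
  show "mv n N (\<lambda>k. if k = j then 1 else 0) i = N i j" unfolding mv_def e using j by simp
qed

lemma Svec_mv: "Smat n n N \<Longrightarrow> Svec n u \<Longrightarrow> Svec n (mv n N u)"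
  unfolding Svec_def Smat_def mv_def by (auto intro!: vge_sum vge_mult0)

lemma zero_mod_mv: "Smat n n N \<Longrightarrow> zero_mod n u \<Longrightarrow> zero_mod n (mv n N u)"
  unfolding zero_mod_def Smat_def mv_def by (auto intro!: vge_sum vge_mult0)

lemma zero_mod_diff: "zero_mod n a \<Longrightarrow> zero_mod n b \<Longrightarrow> zero_mod n (\<lambda>i. a i - b i)"
  unfolding zero_mod_def by (auto intro: vge_diff)

lemma zero_mod_comb_small: "(\<And>j. j \<in> J \<Longrightarrow> vge 1 (c j)) \<Longrightarrow> (\<And>j. j \<in> J \<Longrightarrow> Svec n (x j))
   \<Longrightarrow> zero_mod n (\<lambda>i. \<Sum>j\<in>J. c j * x j i)"
  unfolding zero_mod_def Svec_def by (auto intro!: vge_sum vge_mult0')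

lemma zero_mod_comb_zero_mod: "(\<And>j. j \<in> J \<Longrightarrow> vge 0 (c j)) \<Longrightarrow> (\<And>j. j \<in> J \<Longrightarrow> zero_mod n (x j))
   \<Longrightarrow> zero_mod n (\<lambda>i. \<Sum>j\<in>J. c j * x j i)"
  unfolding zero_mod_def by (auto intro!: vge_sum vge_mult0)

lemma mv_Imat_cong:
  assumes X: "mcong n n X Imat" and c: "\<forall>k<n. vge 0 (c k)" and j: "j < n"
  shows "vge 1 (c j - mv n X c j)"
proof -
  have "c j = (\<Sum>k<n. Imat j k * c k)"
  proof -
    have e: "(\<lambda>k. Imat j k * c k) = (\<lambda>k. if k = j then c j else 0)" by (auto simp: Imat_def)
    show ?thesis unfolding e using j by simp
  qed
  then have "c j - mv n X c j = (\<Sum>k<n. (Imat j k - X j k) * c k)"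
    unfolding mv_def by (simp add: sum_subtractf[symmetric] algebra_simps)
  moreover have "vge 1 (\<Sum>k<n. (Imat j k - X j k) * c k)"
  proof (rule vge_sum)
    fix k assume k: "k \<in> {..<n}"
    have "vge 1 (X j k - Imat j k)" using X j k unfolding mcong_def by simp
    then have "vge 1 (Imat j k - X j k)" by (metis vge_neg minus_diff_eq)
    then show "vge 1 ((Imat j k - X j k) * c k)" using c k by (intro vge_mult0') auto
  qed
  ultimately show ?thesis by simp
qed

lemma zero_mod_col_mcong: "zero_mod R (\<lambda>i. \<Sum>j<C. c j * B i j) \<Longrightarrow> mcong R 1 (matmul C B (\<lambda>j d. c j)) (\<lambda>_ _. 0)"
  unfolding zero_mod_def mcong_def matmul_def by (simp add: mult.commute)

lemma leftinv_indep:
  assumes B: "Smat R C B" and A: "Smat C R A" and AB: "mcong C C (matmul R A B) Imat"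
  shows "indep R {..<C} (\<lambda>j i. B i j)"
  unfolding indep_def
proof (intro allI impI)
  fix c assume c: "\<forall>j\<in>{..<C}. vge 0 (c j)" and z: "zero_mod R (\<lambda>i. \<Sum>j\<in>{..<C}. c j * (\<lambda>j i. B i j) j i)"
  define X where "X = (\<lambda>(j::nat) (d::nat). c j)"
  have XS: "Smat C 1 X" using c by (simp add: Smat_def X_def)
  have "zero_mod R (\<lambda>i. \<Sum>j<C. c j * B i j)" using z by simp
  from zero_mod_col_mcong[OF this] have "mcong R 1 (matmul C B X) (\<lambda>_ _. 0)" by (simp add: X_def)
  then have "mcong C 1 (matmul R A (matmul C B X)) (matmul R A (\<lambda>_ _. 0))"
    by (rule mcong_mult_right[OF Smat_mult[OF B XS] A])
  moreover have "matmul R A (matmul C B X) = matmul C (matmul R A B) X" by (simp add: matmul_assoc)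
  moreover have "mcong C 1 (matmul C (matmul R A B) X) (matmul C Imat X)"
    by (rule mcong_mult_left[OF XS _ AB]) simp
  moreover have "mcong C 1 (matmul C Imat X) X" by (rule matmul_Im_left)
  moreover have "matmul R A (\<lambda>_ _. 0) = (\<lambda>_ _. 0)" by (simp add: matmul_def)
  ultimately have "mcong C 1 X (\<lambda>_ _. 0)" by (metis mcong_sym mcong_trans)
  then show "\<forall>j\<in>{..<C}. vge 1 (c j)" by (simp add: mcong_def X_def)
qed

lemma indep_cancel:
  assumes ind: "indep R {..<C} (\<lambda>j i. B i j)" and X: "Smat C D X" and Y: "Smat C D Y"
    and c: "mcong R D (matmul C B X) (matmul C B Y)"
  shows "mcong C D X Y"
  unfolding mcong_def
proof (intro allI impI)
  fix j d assume j: "j < C" and d: "d < D"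
  have "\<forall>j\<in>{..<C}. vge 0 (X j d - Y j d)" using X Y d unfolding Smat_def by (auto intro: vge_diff)
  moreover have "zero_mod R (\<lambda>i. \<Sum>j\<in>{..<C}. (X j d - Y j d) * B i j)"
    unfolding zero_mod_def
  proof (intro allI impI)
    fix i assume i: "i < R"
    have "(\<Sum>j\<in>{..<C}. (X j d - Y j d) * B i j) = matmul C B X i d - matmul C B Y i d"
      unfolding matmul_def by (simp add: sum_subtractf[symmetric] algebra_simps)
    then show "vge 1 (\<Sum>j\<in>{..<C}. (X j d - Y j d) * B i j)" using c i d unfolding mcong_def by simp
  qed
  moreover have "(\<forall>j\<in>{..<C}. vge 0 ((\<lambda>j. X j d - Y j d) j)) \<longrightarrow>
      zero_mod R (\<lambda>i. \<Sum>j\<in>{..<C}. (\<lambda>j. X j d - Y j d) j * B i j) \<longrightarrow>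
      (\<forall>j\<in>{..<C}. vge 1 ((\<lambda>j. X j d - Y j d) j))"
    using ind unfolding indep_def by (rule spec)
  ultimately show "vge 1 (X j d - Y j d)" using j by simp
qed

lemma Smat_cols: "Smat R C B \<Longrightarrow> \<forall>j\<in>{..<C}. Svec R (\<lambda>i. B i j)"
  unfolding Smat_def Svec_def by auto

lemma square_eq:
  assumes "Smat R C B" "Smat C R A" "mcong R R (matmul C B A) Imat" "mcong C C (matmul R A B) Imat"
  shows "R = C"
proof -
  have "C \<le> R" using indep_card[OF _ Smat_cols[OF assms(1)] leftinv_indep[OF assms(1,2,4)]] by simp
  moreover have "R \<le> C" using indep_card[OF _ Smat_cols[OF assms(2)] leftinv_indep[OF assms(2,1,3)]] by simp
  ultimately show ?thesis by simp
qed

lemma span_to_mat: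
  assumes "\<forall>k<R. inspan R {..<C} (\<lambda>j i. B i j) (\<lambda>i. Imat i k)"
  shows "\<exists>A'. Smat C R A' \<and> mcong R R (matmul C B A') Imat"
proof -
  have "\<forall>k. \<exists>c. k < R \<longrightarrow> (\<forall>j\<in>{..<C}. vge 0 (c j)) \<and> zero_mod R (\<lambda>i. Imat i k - (\<Sum>j\<in>{..<C}. c j * B i j))"
    using assms unfolding inspan_def by auto
  then obtain cf where cf: "\<And>k. k < R \<Longrightarrow> (\<forall>j\<in>{..<C}. vge 0 (cf k j)) \<and> zero_mod R (\<lambda>i. Imat i k - (\<Sum>j\<in>{..<C}. cf k j * B i j))"
    by metis
  define A' where "A' j k = cf k j" for j k
  have "Smat C R A'" using cf unfolding Smat_def A'_def by auto
  moreover have "mcong R R (matmul C B A') Imat"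
    unfolding mcong_def
  proof (intro allI impI)
    fix i k assume i: "i < R" and k: "k < R"
    have "vge 1 (Imat i k - (\<Sum>j\<in>{..<C}. cf k j * B i j))" using cf[OF k] i unfolding zero_mod_def by blast
    then have "vge 1 ((\<Sum>j\<in>{..<C}. cf k j * B i j) - Imat i k)" by (metis vge_neg minus_diff_eq)
    then show "vge 1 (matmul C B A' i k - Imat i k)"
      unfolding matmul_def A'_def by (simp add: mult.commute)
  qed
  ultimately show ?thesis by blast
qed

lemma inv_swap:
  assumes A: "Smat n n A" and B: "Smat n n B" and AB: "mcong n n (matmul n A B) Imat"
  shows "mcong n n (matmul n B A) Imat"
proof -
  have ind: "indep n {..<n} (\<lambda>j i. B i j)" by (rule leftinv_indep[OF B A AB])
  have "\<forall>k<n. inspan n {..<n} (\<lambda>j i. B i j) (\<lambda>i. Imat i k)"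
    using indep_full_span[OF ind Smat_cols[OF B]] by (simp add: Svec_def Imat_def)
  then obtain A' where A': "Smat n n A'" "mcong n n (matmul n B A') Imat" using span_to_mat by blast
  have "mcong n n (matmul n A (matmul n B A')) (matmul n A Imat)"
    by (rule mcong_mult_right[OF Smat_mult[OF B A'(1)] A A'(2)])
  moreover have "mcong n n (matmul n A Imat) A" by (rule matmul_Im_right)
  moreover have "matmul n A (matmul n B A') = matmul n (matmul n A B) A'" by (simp add: matmul_assoc)
  moreover have "mcong n n (matmul n (matmul n A B) A') (matmul n Imat A')"
    by (rule mcong_mult_left[OF A' (1) _ AB]) simp
  moreover have "mcong n n (matmul n Imat A') A'" by (rule matmul_Im_left)
  ultimately have "mcong n n A' A" by (metis mcong_sym mcong_trans)
  then have "mcong n n (matmul n B A') (matmul n B A)" by (rule mcong_mult[OF A'(1) B mcong_refl])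
  then show ?thesis using A'(2) by (metis mcong_sym mcong_trans)
qed

end

section \<open>Normal form of square-zero matrices modulo l\<close>

text \<open>If N^2 = 0 mod l, then (S/lS)^n has a basis N u_0, u_0, ..., N u_(p-1), u_(p-1),
  w_0, ..., w_(q-1) with N w_j = 0 mod l; in this basis N is the Jordan matrix with p
  blocks of size 2 followed by q blocks of size 1.  The vectors u_j are chosen so that
  the N u_j form a basis of the image of N; the w_j complete the family to a basis.\<close>

context valued_field
begin

lemma max_indep_image_family:
  assumes NS: "Smat n n N"
  shows "\<exists>p u. (\<forall>j<p. Svec n (u j)) \<and> indep n {..<p} (\<lambda>j. mv n N (u j)) \<and>
     (\<forall>z. Svec n z \<longrightarrow> inspan n {..<p} (\<lambda>j. mv n N (u j)) (mv n N z))"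
proof -
  define PP where "PP p \<longleftrightarrow> (\<exists>u. (\<forall>j<p. Svec n (u j)) \<and> indep n {..<p} (\<lambda>j. mv n N (u j)))" for p
  have bnd: "\<forall>p. PP p \<longrightarrow> id p < Suc n"
  proof (intro allI impI)
    fix p assume "PP p"
    then obtain u where u: "\<forall>j<p. Svec n (u j)" "indep n {..<p} (\<lambda>j. mv n N (u j))" unfolding PP_def by blast
    have "card {..<p} \<le> n" by (rule indep_card[OF _ _ u(2)]) (use u(1) Svec_mv[OF NS] in auto)
    then show "id p < Suc n" by simp
  qed
  have "PP 0" unfolding PP_def by (simp add: indep_empty)
  from ex_has_greatest_nat[OF this bnd] obtain p where p: "PP p" and mx: "\<forall>y. PP y \<longrightarrow> y \<le> p" by auto
  from p obtain u where u: "\<forall>j<p. Svec n (u j)" "indep n {..<p} (\<lambda>j. mv n N (u j))" unfolding PP_def by blast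
  have "\<forall>z. Svec n z \<longrightarrow> inspan n {..<p} (\<lambda>j. mv n N (u j)) (mv n N z)"
  proof (intro allI impI)
    fix z assume z: "Svec n z"
    show "inspan n {..<p} (\<lambda>j. mv n N (u j)) (mv n N z)"
    proof (rule ccontr)
      assume ns: "\<not> ?thesis"
      have "indep n (insert p {..<p}) ((\<lambda>j. mv n N (u j))(p := mv n N z))"
        by (rule indep_insert[OF _ _ u(2) ns Svec_mv[OF NS z]]) auto
      moreover have "(\<lambda>j. mv n N ((u(p := z)) j)) = (\<lambda>j. mv n N (u j))(p := mv n N z)" by auto
      moreover have "insert p {..<p} = {..<Suc p}" by auto
      ultimately have "indep n {..<Suc p} (\<lambda>j. mv n N ((u(p := z)) j))" by simp
      moreover have "\<forall>j<Suc p. Svec n ((u(p := z)) j)" using u(1) z by auto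
      ultimately have "PP (Suc p)" unfolding PP_def by blast
      then show False using mx by fastforce
    qed
  qed
  then show ?thesis using u by blast
qed

definition chain_family :: "nat \<Rightarrow> (nat \<Rightarrow> nat \<Rightarrow> 'k) \<Rightarrow> nat \<Rightarrow> (nat \<Rightarrow> nat \<Rightarrow> 'k)
    \<Rightarrow> (nat \<Rightarrow> nat \<Rightarrow> 'k) \<Rightarrow> nat \<Rightarrow> nat \<Rightarrow> 'k" where
  "chain_family n N p u w j =
     (if j < 2*p then (if even j then mv n N (u (j div 2)) else u (j div 2)) else w (j - 2*p))"

lemma chain_family_even: "j < p \<Longrightarrow> chain_family n N p u w (2*j) = mv n N (u j)"
  unfolding chain_family_def by simp

lemma chain_family_odd': "j < p \<Longrightarrow> chain_family n N p u w (Suc (2*j)) = u j"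
  unfolding chain_family_def by simp

lemma chain_family_w: "chain_family n N p u w (2*p + j) = w j"
  unfolding chain_family_def by simp

lemma chain_family_S:
  assumes "Smat n n N" "\<forall>j<p. Svec n (u j)" "\<forall>j<q. Svec n (w j)" "j < 2*p+q"
  shows "Svec n (chain_family n N p u w j)"
  using assms Svec_mv[OF assms(1)] unfolding chain_family_def by auto

lemma square_zero_mv:
  assumes "Smat n n N" "mcong n n (matmul n N N) (\<lambda>_ _. 0)" "Svec n u"
  shows "zero_mod n (mv n N (mv n N u))"
  unfolding mv_mv unfolding zero_mod_def mv_def
proof (intro allI impI)
  fix i assume i: "i < n"
  show "vge 1 (\<Sum>j<n. matmul n N N i j * u j)"
  proof (rule vge_sum)
    fix j assume j: "j \<in> {..<n}"
    have "vge 1 (matmul n N N i j)" using assms(2) i j unfolding mcong_def by simp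
    moreover have "vge 0 (u j)" using assms(3) j unfolding Svec_def by simp
    ultimately show "vge 1 (matmul n N N i j * u j)" by (rule vge_mult0')
  qed
qed

text \<open>If N^2 = 0 mod l and the N u_j are independent, then the pairs N u_j, u_j are
  independent: apply N to a relation to kill the coefficients of the u_j first.\<close>

lemma chain_family_indep:
  assumes NS: "Smat n n N" and NN: "mcong n n (matmul n N N) (\<lambda>_ _. 0)"
    and uS: "\<forall>j<p. Svec n (u j)" and ind: "indep n {..<p} (\<lambda>j. mv n N (u j))"
  shows "indep n {..<2*p} (chain_family n N p u w)"
  unfolding indep_def
proof (intro allI impI)
  fix c assume cS: "\<forall>t\<in>{..<2*p}. vge 0 (c t)"
    and z: "zero_mod n (\<lambda>i. \<Sum>t\<in>{..<2*p}. c t * chain_family n N p u w t i)"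
  define s1 where "s1 = (\<lambda>i. \<Sum>j<p. c (2*j) * mv n N (u j) i)"
  define s2 where "s2 = (\<lambda>i. \<Sum>j<p. c (2*j+1) * u j i)"
  have ceven: "vge 0 (c (2*j))" "vge 0 (c (2*j+1))" if "j < p" for j using cS that by auto
  have "(\<lambda>i. \<Sum>t\<in>{..<2*p}. c t * chain_family n N p u w t i) = (\<lambda>i. s1 i + s2 i)"
    unfolding s1_def s2_def sum_2p
    by (auto simp: chain_family_even chain_family_odd' sum.distrib[symmetric] intro!: ext sum.cong)
  with z have z': "zero_mod n (\<lambda>i. s1 i + s2 i)" by simp
  have "zero_mod n (mv n N (\<lambda>i. s1 i + s2 i))" by (rule zero_mod_mv[OF NS z'])
  then have z2: "zero_mod n (\<lambda>i. mv n N s1 i + mv n N s2 i)" by (simp add: mv_add)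
  have "zero_mod n (mv n N s1)"
    unfolding s1_def mv_sum
    by (rule zero_mod_comb_zero_mod) (use ceven square_zero_mv[OF NS NN] uS in auto)
  with z2 have "zero_mod n (\<lambda>i. (mv n N s1 i + mv n N s2 i) - mv n N s1 i)" by (rule zero_mod_diff)
  then have "zero_mod n (\<lambda>i. \<Sum>j\<in>{..<p}. c (2*j+1) * mv n N (u j) i)" unfolding s2_def mv_sum by simp
  then have codd: "\<forall>j\<in>{..<p}. vge 1 (c (2*j+1))"
    using ind ceven(2) unfolding indep_def by (auto dest!: spec[of _ "\<lambda>j. c (2*j+1)"])
  have "zero_mod n s2" unfolding s2_def by (rule zero_mod_comb_small) (use codd uS in auto)
  with z' have "zero_mod n (\<lambda>i. (s1 i + s2 i) - s2 i)" by (rule zero_mod_diff)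
  then have "zero_mod n (\<lambda>i. \<Sum>j\<in>{..<p}. c (2*j) * mv n N (u j) i)" unfolding s1_def by simp
  then have cev: "\<forall>j\<in>{..<p}. vge 1 (c (2*j))"
    using ind ceven(1) unfolding indep_def by (auto dest!: spec[of _ "\<lambda>j. c (2*j)"])
  show "\<forall>t\<in>{..<2*p}. vge 1 (c t)"
  proof
    fix t assume "t \<in> {..<2*p}"
    then have "t div 2 < p" by auto
    then show "vge 1 (c t)" using cev codd by (cases "even t") (auto elim!: evenE oddE)
  qed
qed

lemma chain_family_odd_comb:
  "(\<Sum>t<2*p+q. (if t < 2*p \<and> odd t then g (t div 2) else 0) * chain_family n N p u w t i)
     = (\<Sum>j<p. g j * u j i)"
proof -
  let ?d = "\<lambda>t. if t < 2*p \<and> odd t then g (t div 2) else 0"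
  have "(\<Sum>t<2*p+q. ?d t * chain_family n N p u w t i)
      = (\<Sum>t<2*p. ?d t * chain_family n N p u w t i) + (\<Sum>t\<in>{2*p..<2*p+q}. ?d t * chain_family n N p u w t i)"
    by (rule sum_lessThan_split) simp
  also have "(\<Sum>t\<in>{2*p..<2*p+q}. ?d t * chain_family n N p u w t i) = 0" by simp
  also have "(\<Sum>t<2*p. ?d t * chain_family n N p u w t i) = (\<Sum>j<p. g j * u j i)"
    unfolding sum_2p by (intro sum.cong) (auto simp: chain_family_odd')
  finally show ?thesis by simp
qed

text \<open>A vector z outside the span of the family can be corrected by a combination of the
  u_j into a vector z' with N z' = 0 mod l, still outside the span; so the family can be
  extended by a new kernel vector.\<close>

lemma chain_family_extend:
  assumes NS: "Smat n n N" and uS: "\<forall>j<p. Svec n (u j)"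
    and maxu: "\<forall>z. Svec n z \<longrightarrow> inspan n {..<p} (\<lambda>j. mv n N (u j)) (mv n N z)"
    and ind: "indep n {..<2*p+q} (chain_family n N p u w)"
    and z: "Svec n z" and ns: "\<not> inspan n {..<2*p+q} (chain_family n N p u w) z"
  shows "\<exists>z'. Svec n z' \<and> zero_mod n (mv n N z') \<and>
           indep n {..<2*p + Suc q} (chain_family n N p u (w(q := z')))"
proof -
  define m where "m = 2*p+q"
  obtain g where g: "\<forall>j\<in>{..<p}. vge 0 (g j)"
      "zero_mod n (\<lambda>i. mv n N z i - (\<Sum>j\<in>{..<p}. g j * mv n N (u j) i))"
    using maxu z unfolding inspan_def by blast
  define z' where "z' = (\<lambda>i. z i - (\<Sum>j\<in>{..<p}. g j * u j i))"
  have z'S: "Svec n z'" unfolding z'_def using z g(1) uS unfolding Svec_def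
    by (auto intro!: vge_diff vge_sum vge_mult0)
  have "mv n N z' = (\<lambda>i. mv n N z i - (\<Sum>j\<in>{..<p}. g j * mv n N (u j) i))"
    unfolding z'_def mv_diff mv_sum by simp
  then have Nz': "zero_mod n (mv n N z')" using g(2) by simp
  text \<open>The correction term is the combination d of the odd members u_j of the family.\<close>
  define d where "d t = (if t < 2*p \<and> odd t then g (t div 2) else 0)" for t
  have dS: "\<forall>t\<in>{..<m}. vge 0 (d t)" using g(1) unfolding d_def by auto
  have z'_eq: "z' = (\<lambda>i. z i - (\<Sum>t\<in>{..<m}. d t * chain_family n N p u w t i))"
    unfolding z'_def d_def m_def chain_family_odd_comb by simp
  have ns': "\<not> inspan n {..<m} (chain_family n N p u w) z'"
    using inspan_translate[OF dS] ns unfolding z'_eq m_def by blast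
  have "indep n (insert m {..<m}) ((chain_family n N p u w)(m := z'))"
    by (rule indep_insert[OF _ _ ind[folded m_def] ns' z'S]) auto
  moreover have "insert m {..<m} = {..<2*p + Suc q}" by (auto simp: m_def)
  moreover have "indep n {..<2*p + Suc q} ((chain_family n N p u w)(m := z'))
      = indep n {..<2*p + Suc q} (chain_family n N p u (w(q := z')))"
    by (rule indep_cong) (auto simp: m_def chain_family_def)
  ultimately show ?thesis using z'S Nz' by auto
qed

lemma complete_chain_family:
  assumes NS: "Smat n n N" and NN: "mcong n n (matmul n N N) (\<lambda>_ _. 0)"
    and uS: "\<forall>j<p. Svec n (u j)" and ind: "indep n {..<p} (\<lambda>j. mv n N (u j))"
    and maxu: "\<forall>z. Svec n z \<longrightarrow> inspan n {..<p} (\<lambda>j. mv n N (u j)) (mv n N z)"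
  shows "\<exists>q w. (\<forall>j<q. Svec n (w j) \<and> zero_mod n (mv n N (w j))) \<and>
     indep n {..<2*p+q} (chain_family n N p u w) \<and>
     (\<forall>z. Svec n z \<longrightarrow> inspan n {..<2*p+q} (chain_family n N p u w) z)"
proof -
  define QQ where "QQ q \<longleftrightarrow> (\<exists>w. (\<forall>j<q. Svec n (w j) \<and> zero_mod n (mv n N (w j))) \<and>
      indep n {..<2*p+q} (chain_family n N p u w))" for q
  have bnd: "\<forall>q. QQ q \<longrightarrow> id q < Suc n"
  proof (intro allI impI)
    fix q assume "QQ q"
    then obtain w where w: "\<forall>j<q. Svec n (w j)" "indep n {..<2*p+q} (chain_family n N p u w)"
      unfolding QQ_def by blast
    have "card {..<2*p+q} \<le> n" by (rule indep_card[OF _ _ w(2)]) (use chain_family_S[OF NS uS w(1)] in auto)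
    then show "id q < Suc n" by simp
  qed
  have "QQ 0" unfolding QQ_def using chain_family_indep[OF NS NN uS ind] by auto
  from ex_has_greatest_nat[OF this bnd] obtain q where q: "QQ q" and mx: "\<forall>y. QQ y \<longrightarrow> y \<le> q" by auto
  from q obtain w where w: "\<forall>j<q. Svec n (w j) \<and> zero_mod n (mv n N (w j))"
      "indep n {..<2*p+q} (chain_family n N p u w)"
    unfolding QQ_def by blast
  have "inspan n {..<2*p+q} (chain_family n N p u w) z" if z: "Svec n z" for z
  proof (rule ccontr)
    assume "\<not> ?thesis"
    then obtain z' where "Svec n z'" "zero_mod n (mv n N z')"
        "indep n {..<2*p + Suc q} (chain_family n N p u (w(q := z')))"
      using chain_family_extend[OF NS uS maxu w(2) z] by blast
    then have "QQ (Suc q)" unfolding QQ_def using w(1) by (intro exI[of _ "w(q := z')"]) auto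
    then show False using mx by fastforce
  qed
  then show ?thesis using w by blast
qed

definition jordan2 :: "nat \<Rightarrow> nat \<Rightarrow> nat \<Rightarrow> 'k" where
  "jordan2 p s t = (if t = Suc s \<and> odd t \<and> t < 2*p then 1 else 0)"

definition ker_in_image :: "nat \<Rightarrow> (nat \<Rightarrow> nat \<Rightarrow> 'k) \<Rightarrow> bool" where
  "ker_in_image n N \<longleftrightarrow>
     (\<forall>c. Svec n c \<and> zero_mod n (mv n N c) \<longrightarrow> (\<exists>d. Svec n d \<and> zero_mod n (\<lambda>i. c i - mv n N d i)))"

lemma Smat_jordan2[simp]: "Smat R C (jordan2 p)" unfolding Smat_def jordan2_def by simp

lemma matmul_jordan2:
  "matmul n B (jordan2 p) i t = (if odd t \<and> t < 2*p \<and> t \<le> n then B i (t - 1) else 0)"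
proof -
  have e: "(\<lambda>s. B i s * jordan2 p s t) = (\<lambda>s. if s = t - 1 \<and> odd t \<and> t < 2*p then B i s else 0)"
    using odd_pos[of t] by (auto simp: jordan2_def fun_eq_iff)
  show ?thesis unfolding matmul_def e using odd_pos[of t] by (cases "odd t") auto
qed

lemma basis_matrix_invertible:
  assumes BS: "Smat n m B" and indB: "indep n {..<m} (\<lambda>j i. B i j)"
    and spanB: "\<forall>z. Svec n z \<longrightarrow> inspan n {..<m} (\<lambda>j i. B i j) z"
  shows "m = n \<and> (\<exists>A. Smat n n A \<and> mcong n n (matmul n A B) Imat)"
proof -
  have "\<forall>k<n. inspan n {..<m} (\<lambda>j i. B i j) (\<lambda>i. Imat i k)"
    using spanB by (auto simp: Svec_def Imat_def)
  then obtain A where AS: "Smat m n A" and BA: "mcong n n (matmul m B A) Imat" using span_to_mat by blast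
  have "mcong n m (matmul n (matmul m B A) B) (matmul n Imat B)" by (rule mcong_mult_left[OF BS _ BA]) simp
  also have "mcong n m \<dots> B" by (rule matmul_Im_left)
  also have "mcong n m \<dots> (matmul m B Imat)" by (rule mcong_sym[OF matmul_Im_right])
  finally have "mcong n m (matmul m B (matmul n A B)) (matmul m B Imat)" by (simp add: matmul_assoc)
  then have AB: "mcong m m (matmul n A B) Imat"
    by (rule indep_cancel[OF indB Smat_mult[OF AS BS] Smat_Imat])
  have "n = m" by (rule square_eq[OF BS AS BA AB])
  then show ?thesis using AS AB by auto
qed

lemma chain_basis_conjugates:
  assumes NS: "Smat n n N" and NN: "mcong n n (matmul n N N) (\<lambda>_ _. 0)"
    and uS: "\<forall>j<p. Svec n (u j)" and w: "\<forall>j<q. zero_mod n (mv n N (w j))" and n: "n = 2*p + q"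
  shows "mcong n n (matmul n N (\<lambda>i j. chain_family n N p u w j i))
                   (matmul n (\<lambda>i j. chain_family n N p u w j i) (jordan2 p))"
  unfolding mcong_def
proof (intro allI impI)
  fix i t assume i: "i < n" and t: "t < n"
  let ?B = "\<lambda>i j. chain_family n N p u w j i"
  have NB: "matmul n N ?B i t = mv n N (chain_family n N p u w t) i" unfolding matmul_def mv_def by simp
  consider (odd) j where "t = Suc (2*j)" "j < p" | (even) j where "t = 2*j" "j < p"
    | (kernel) j where "t = 2*p + j" "j < q"
  proof (cases "t < 2*p")
    case True
    then show thesis using that(1,2)[of "t div 2"] by (cases "even t") (auto elim!: evenE oddE)
  next
    case False
    then show thesis using that(3)[of "t - 2*p"] t n by simp
  qed
  then show "vge 1 (matmul n N ?B i t - matmul n ?B (jordan2 p) i t)"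
  proof cases
    case odd
    then show ?thesis using t NB by (simp add: matmul_jordan2 chain_family_odd' chain_family_even)
  next
    case even
    then have "zero_mod n (mv n N (mv n N (u j)))" using square_zero_mv[OF NS NN] uS by simp
    then show ?thesis using even i NB unfolding zero_mod_def by (simp add: matmul_jordan2 chain_family_even)
  next
    case kernel
    then show ?thesis using w i NB unfolding zero_mod_def by (simp add: matmul_jordan2 chain_family_w)
  qed
qed

text \<open>If ker N is contained in im N modulo l, no basis vector beyond the 2-blocks can be
  killed by N: its image e_t under the inverse would lie in the image of J, whose row t
  vanishes for t >= 2p.\<close>

lemma ker_in_image_no_kernel_column:
  assumes KI: "ker_in_image n N" and NS: "Smat n n N"
    and AS: "Smat n n A" and BS: "Smat n n B" and AB: "mcong n n (matmul n A B) Imat"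
    and ANB: "mcong n n (matmul n (matmul n A N) B) (jordan2 p)"
    and t: "2*p \<le> t" "t < n" and ker: "zero_mod n (mv n N (\<lambda>i. B i t))"
  shows False
proof -
  define c where "c i = B i t" for i
  have cS: "Svec n c" using BS t unfolding c_def Smat_def Svec_def by simp
  obtain d where dS: "Svec n d" and cd: "zero_mod n (\<lambda>i. c i - mv n N d i)"
    using KI cS ker unfolding ker_in_image_def c_def by blast
  define E where "E = (\<lambda>(i::nat) (_::nat). Imat i t :: 'k)"
  define Cm where "Cm = (\<lambda>(i::nat) (_::nat). c i)"
  define Dm where "Dm = (\<lambda>(i::nat) (_::nat). d i)"
  have DS: "Smat n 1 Dm" using dS unfolding Dm_def Smat_def Svec_def by simp
  have CBE: "Cm = matmul n B E"
  proof (intro ext)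
    fix i z
    have e: "(\<lambda>s. B i s * Imat s t) = (\<lambda>s. if s = t then B i t else 0)" by (auto simp: Imat_def)
    show "Cm i z = matmul n B E i z" unfolding matmul_def E_def e using t by (simp add: Cm_def c_def)
  qed
  have BA: "mcong n n (matmul n B A) Imat" by (rule inv_swap[OF AS BS AB])
  have "mcong n 1 (matmul n (matmul n A B) E) (matmul n Imat E)"
    by (rule mcong_mult_left[OF _ _ AB]) (simp_all add: E_def Smat_def Imat_def)
  also have "mcong n 1 \<dots> E" by (rule matmul_Im_left)
  finally have ACE: "mcong n 1 (matmul n A Cm) E" unfolding CBE by (simp add: matmul_assoc)
  have CND: "mcong n 1 Cm (matmul n N Dm)"
    using cd unfolding mcong_def zero_mod_def Cm_def Dm_def matmul_def mv_def by simp
  have "mcong n 1 (matmul n A Cm) (matmul n A (matmul n N Dm))"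
    by (rule mcong_mult_right[OF _ AS CND]) (use cS in \<open>simp add: Cm_def Smat_def Svec_def\<close>)
  also have "mcong n 1 (matmul n A (matmul n N Dm)) (matmul n (matmul n A N) (matmul n (matmul n B A) Dm))"
  proof -
    have "mcong n 1 (matmul n (matmul n B A) Dm) (matmul n Imat Dm)" by (rule mcong_mult_left[OF DS _ BA]) simp
    also have "mcong n 1 \<dots> Dm" by (rule matmul_Im_left)
    finally have "mcong n 1 (matmul n (matmul n A N) Dm) (matmul n (matmul n A N) (matmul n (matmul n B A) Dm))"
      by (rule mcong_mult_right[OF DS Smat_mult[OF AS NS] mcong_sym])
    then show ?thesis by (simp add: matmul_assoc)
  qed
  also have "mcong n 1 \<dots> (matmul n (jordan2 p) (matmul n A Dm))"
    using mcong_mult_left[OF Smat_mult[OF AS DS] Smat_jordan2 ANB] by (simp add: matmul_assoc)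
  finally have "mcong n 1 E (matmul n (jordan2 p) (matmul n A Dm))" using ACE by (metis mcong_sym mcong_trans)
  then have "vge 1 (E t 0 - matmul n (jordan2 p) (matmul n A Dm) t 0)" using t unfolding mcong_def by simp
  moreover have "matmul n (jordan2 p) (matmul n A Dm) t 0 = 0" unfolding matmul_def
    using t by (intro sum.neutral) (simp add: jordan2_def)
  ultimately show False by (simp add: E_def Imat_def)
qed

lemma square_zero_normal_form:
  assumes NS: "Smat n n N" and NN: "mcong n n (matmul n N N) (\<lambda>_ _. 0)"
  shows "\<exists>p q A B. 2*p+q = n \<and> Smat n n A \<and> Smat n n B \<and> mcong n n (matmul n A B) Imat \<and>
     mcong n n (matmul n (matmul n A N) B) (jordan2 p) \<and> (ker_in_image n N \<longrightarrow> q = 0)"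
proof -
  obtain p u where uS: "\<forall>j<p. Svec n (u j)" and ind: "indep n {..<p} (\<lambda>j. mv n N (u j))"
    and maxu: "\<forall>z. Svec n z \<longrightarrow> inspan n {..<p} (\<lambda>j. mv n N (u j)) (mv n N z)"
    using max_indep_image_family[OF NS] by blast
  obtain q w where w: "\<forall>j<q. Svec n (w j) \<and> zero_mod n (mv n N (w j))"
    and indF: "indep n {..<2*p+q} (chain_family n N p u w)"
    and spanF: "\<forall>z. Svec n z \<longrightarrow> inspan n {..<2*p+q} (chain_family n N p u w) z"
    using complete_chain_family[OF NS NN uS ind maxu] by blast
  define B where "B i j = chain_family n N p u w j i" for i j
  have wS: "\<forall>j<q. Svec n (w j)" using w by simp
  have BS: "Smat n (2*p+q) B"
    using chain_family_S[OF NS uS wS] unfolding Smat_def B_def Svec_def by auto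
  obtain A where nm: "2*p+q = n" and AS: "Smat n n A" and AB: "mcong n n (matmul n A B) Imat"
    using basis_matrix_invertible[OF BS] indF spanF unfolding B_def by auto
  have BS': "Smat n n B" using BS nm by simp
  have NB: "mcong n n (matmul n N B) (matmul n B (jordan2 p))"
    unfolding B_def by (rule chain_basis_conjugates[OF NS NN uS _ nm[symmetric]]) (use w in auto)
  have "mcong n n (matmul n A (matmul n N B)) (matmul n A (matmul n B (jordan2 p)))"
    by (rule mcong_mult_right[OF Smat_mult[OF NS BS'] AS NB])
  also have "mcong n n (matmul n A (matmul n B (jordan2 p))) (matmul n Imat (jordan2 p))"
    using mcong_mult_left[OF Smat_jordan2 _ AB] by (simp add: matmul_assoc)
  also have "mcong n n \<dots> (jordan2 p)" by (rule matmul_Im_left)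
  finally have ANB: "mcong n n (matmul n (matmul n A N) B) (jordan2 p)" by (simp add: matmul_assoc)
  have "q = 0" if KI: "ker_in_image n N"
  proof (rule ccontr)
    assume "q \<noteq> 0"
    then have "zero_mod n (mv n N (\<lambda>i. B i (2*p)))"
      using w chain_family_w[of n N p u w 0] unfolding B_def by simp
    moreover have "2*p < n" using nm \<open>q \<noteq> 0\<close> by simp
    ultimately show False using ker_in_image_no_kernel_column[OF KI NS AS BS' AB ANB, of "2*p"] by simp
  qed
  then show ?thesis using nm AS BS' AB ANB by blast
qed

end

text \<open>For the block list of p blocks of size 2 followed by q of size 1, the blocks start
  at the even positions below 2p and at every position from 2p on; hence jordan_nil of
  this list is the matrix jordan2 p.\<close>

lemma sum_take_rep: "sum_list (take k (replicate p (2::nat) @ replicate q 1)) = 2 * min k p + min (k - p) q"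
  by (simp add: take_append min_def sum_list_replicate)

lemma block_starts_rep:
  assumes "t < 2*p + q"
  shows "t \<in> block_starts (replicate p 2 @ replicate q 1) \<longleftrightarrow> \<not> (odd t \<and> t < 2*p)"
proof
  assume "t \<in> block_starts (replicate p 2 @ replicate q 1)"
  then obtain k where k: "t = 2 * min k p + min (k - p) q"
    unfolding block_starts_def sum_take_rep by auto
  show "\<not> (odd t \<and> t < 2*p)"
  proof
    assume h: "odd t \<and> t < 2*p"
    then have "k < p" using k by (auto simp: min_def split: if_splits)
    then show False using h k by simp
  qed
next
  assume h: "\<not> (odd t \<and> t < 2*p)"
  show "t \<in> block_starts (replicate p 2 @ replicate q 1)"
  proof (cases "t < 2*p")
    case True
    then have "even t" using h by simp
    then have "t = sum_list (take (t div 2) (replicate p 2 @ replicate q 1))"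
      using True unfolding sum_take_rep by (auto simp: min_def)
    moreover have "t div 2 \<le> length (replicate p (2::nat) @ replicate q 1)" using True by simp
    ultimately show ?thesis unfolding block_starts_def by blast
  next
    case False
    then have "t = sum_list (take (p + (t - 2*p)) (replicate p 2 @ replicate q 1))"
      using assms unfolding sum_take_rep by (auto simp: min_def)
    moreover have "p + (t - 2*p) \<le> length (replicate p (2::nat) @ replicate q 1)" using assms False by simp
    ultimately show ?thesis unfolding block_starts_def by blast
  qed
qed

lemma sorted_rep: "sorted_wrt (\<ge>) (replicate p (2::nat) @ replicate q 1)"
proof -
  have a: "sorted_wrt (\<ge>) (replicate k (x::nat))" for k x by (induction k) auto
  show ?thesis unfolding sorted_wrt_append using a by auto
qed

lemma sorted_12:
  assumes "sorted_wrt (\<ge>) ms" "\<forall>m\<in>set ms. m = 1 \<or> m = (2::nat)"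
  shows "ms = replicate (count_list ms 2) 2 @ replicate (count_list ms 1) 1"
  using assms
proof (induction ms)
  case (Cons m ms)
  then have IH: "ms = replicate (count_list ms 2) 2 @ replicate (count_list ms 1) 1" by simp
  show ?case
  proof (cases "m = 2")
    case True
    then show ?thesis using IH by simp
  next
    case False
    then have m1: "m = 1" using Cons by simp
    have "\<forall>x\<in>set ms. x \<le> m" using Cons(2) by simp
    then have "\<forall>x\<in>set ms. x = 1" using Cons(3) m1 by fastforce
    then have "(2::nat) \<notin> set ms" by auto
    then have "count_list ms 2 = 0" by (simp add: count_list_0_iff)
    then show ?thesis using IH m1 by simp
  qed
qed simp

lemma slope_12: "1 / real m = 1 / 2 \<or> 1 / real m = 1 \<Longrightarrow> m = 1 \<or> m = 2"
proof -
  assume h: "1 / real m = 1 / 2 \<or> 1 / real m = 1"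
  then have "m \<noteq> 0" by auto
  then have "real m > 0" by simp
  then show ?thesis using h by (auto simp: divide_eq_eq)
qed

lemma slopes_12_shape:
  assumes "sorted_wrt (\<ge>) ms" "\<forall>m\<in>set ms. 1 / real m = 1 / 2 \<or> 1 / real m = 1"
  obtains p q where "ms = replicate p 2 @ replicate q 1"
  using sorted_12[OF assms(1)] slope_12 assms(2) by blast

context valued_field
begin

lemma S_matrix_iff: "S_matrix v n A \<longleftrightarrow> Smat n n A"
  unfolding S_matrix_def Smat_def by simp

lemma mat_cong_iff: "mat_cong l v n A B \<longleftrightarrow> mcong n n A B"
  unfolding mat_cong_def mcong_def by simp

lemma matpow0: "matpow n A 0 = Imat"
  by (auto simp: Imat_def intro!: ext)

lemma jordan_nil_jordan2:
  assumes "t < 2*p + q"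
  shows "jordan_nil (replicate p 2 @ replicate q 1) s t = jordan2 p s t"
  using block_starts_rep[OF assms] unfolding jordan_nil_def jordan2_def by auto

lemma mcong_jordan_nil:
  "n = 2*p+q \<Longrightarrow> mcong n n X (jordan_nil (replicate p 2 @ replicate q 1)) \<longleftrightarrow> mcong n n X (jordan2 p)"
  unfolding mcong_def using jordan_nil_jordan2 by auto

lemma jordan_type_12:
  assumes "2*p + q = n"
  shows "jordan_type l v n N (replicate p 2 @ replicate q 1) \<longleftrightarrow>
    (\<exists>A B. Smat n n A \<and> Smat n n B \<and> mcong n n (matmul n A B) Imat \<and>
       mcong n n (matmul n (matmul n A N) B) (jordan2 p))"
  using assms sorted_rep[of p q] mcong_jordan_nil[of n p q]
  unfolding jordan_type_def S_matrix_iff mat_cong_iff matpow0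
  by (auto simp: sum_list_replicate)

end

section \<open>The Young polygon and the Newton polygon\<close>

lemma Hp_Nil[simp]: "Hp [] y = 0" unfolding Hp_def by simp

lemma Hp_Cons: "Hp (m # ms) y = min (max y 0) (real m) / real m + Hp ms (y - real m)"
proof -
  have "Hp (m # ms) y = (\<Sum>k<Suc (length ms).
      min (max (y - real (sum_list (take k (m # ms)))) 0) (real ((m # ms) ! k)) / real ((m # ms) ! k))"
    unfolding Hp_def by simp
  also have "\<dots> = min (max y 0) (real m) / real m + (\<Sum>k<length ms.
      min (max (y - real (sum_list (take (Suc k) (m # ms)))) 0) (real ((m # ms) ! Suc k)) / real ((m # ms) ! Suc k))"
    by (subst sum.lessThan_Suc_shift) simp
  also have "(\<Sum>k<length ms.
      min (max (y - real (sum_list (take (Suc k) (m # ms)))) 0) (real ((m # ms) ! Suc k)) / real ((m # ms) ! Suc k))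
      = Hp ms (y - real m)"
    unfolding Hp_def by (intro sum.cong) (auto simp: algebra_simps)
  finally show ?thesis .
qed

text \<open>Since every slope is at most 1, Hp lies below the line y (and below its final
  value); with all blocks of size 2 it lies below y/2; at the right end it equals the
  number of blocks.\<close>

lemma Hp_le: "(\<forall>m\<in>set ms. 1 \<le> m) \<Longrightarrow> Hp ms y \<le> min (max y 0) (real (sum_list ms))"
proof (induction ms arbitrary: y)
  case (Cons m ms)
  have m1: "1 \<le> real m" using Cons by simp
  have a0: "0 \<le> min (max y 0) (real m)" using m1 by simp
  have "min (max y 0) (real m) / real m \<le> min (max y 0) (real m) / 1"
    by (rule divide_left_mono) (use a0 m1 in auto)
  then have "min (max y 0) (real m) / real m \<le> min (max y 0) (real m)" by simp
  moreover have "Hp ms (y - real m) \<le> min (max (y - real m) 0) (real (sum_list ms))" using Cons by simp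
  moreover have "min (max y 0) (real m) + min (max (y - real m) 0) (real (sum_list ms)) \<le> min (max y 0) (real (sum_list (m # ms)))"
    using m1 by (simp add: min_def max_def)
  ultimately show ?case unfolding Hp_Cons by linarith
qed simp

lemma Hp_rep2: "Hp (replicate r 2) y \<le> max y 0 / 2"
proof (induction r arbitrary: y)
  case (Suc r)
  have "Hp (replicate r 2) (y - 2) \<le> max (y - 2) 0 / 2" using Suc by simp
  moreover have "min (max y 0) 2 / 2 + max (y - 2) 0 / 2 \<le> max y 0 / 2" by (simp add: min_def max_def)
  ultimately show ?case by (simp add: Hp_Cons)
qed simp

lemma Hp_total: "(\<forall>m\<in>set ms. 1 \<le> m) \<Longrightarrow> Hp ms (real (sum_list ms)) = real (length ms)"
proof (induction ms)
  case (Cons m ms)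
  have m1: "1 \<le> real m" using Cons by simp
  have "min (max (real (sum_list (m # ms))) 0) (real m) / real m = 1" using m1 by (simp add: min_def)
  then show ?case using Cons by (simp add: Hp_Cons)
qed simp

lemma Np_lower:
  assumes c: "c > 0" and y: "y \<in> {0..real d}"
    and h: "\<forall>i\<le>d. coeff Q (d - i) \<noteq> 0 \<longrightarrow> real i / c \<le> real_of_int (v (coeff Q (d - i)))"
  shows "ereal (y / c) \<le> Np v Q d y"
proof -
  have "convex_on {0..real d} (\<lambda>x. x / c)"
    using c by (intro convex_on_cdiv) (auto simp: convex_on_ident)
  then have "(\<lambda>x. x / c) \<in> {\<phi> :: real \<Rightarrow> real. convex_on {0..real d} \<phi> \<and>
        (\<forall>i\<le>d. coeff Q (d - i) \<noteq> 0 \<longrightarrow> \<phi> (real i) \<le> real_of_int (v (coeff Q (d - i))))}"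
    using h by simp
  then show ?thesis unfolding Np_def by (rule SUP_upper2) simp
qed

lemma Np_upper:
  assumes "coeff Q 0 \<noteq> 0"
  shows "Np v Q d (real d) \<le> ereal (real_of_int (v (coeff Q 0)))"
  unfolding Np_def using assms by (intro SUP_least) auto

context valued_field
begin

text \<open>coeff_bound c Q d: the coefficient of t^k of Q has valuation at least (d - k)/c,
  i.e. the points of the Newton polygon of Q (degree d) lie above the line y / c.
  The property is multiplicative, so it passes from P to P^r.\<close>

definition coeff_bound :: "int \<Rightarrow> 'k poly \<Rightarrow> nat \<Rightarrow> bool" where
  "coeff_bound c Q d \<longleftrightarrow> (\<forall>k. coeff Q k \<noteq> 0 \<longrightarrow> int d - int k \<le> c * v (coeff Q k))"

lemma coeff_bound_sum:
  assumes "c \<ge> 0" "\<And>j. j \<in> J \<Longrightarrow> f j = 0 \<or> M \<le> c * v (f j)"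
  shows "(\<Sum>j\<in>J. f j) = 0 \<or> M \<le> c * v (\<Sum>j\<in>J. f j)"
  using assms(2)
proof (induction J rule: infinite_finite_induct)
  case (insert x F)
  have a: "f x = 0 \<or> M \<le> c * v (f x)" using insert by simp
  have b: "(\<Sum>j\<in>F. f j) = 0 \<or> M \<le> c * v (\<Sum>j\<in>F. f j)" using insert by simp
  have "f x + (\<Sum>j\<in>F. f j) = 0 \<or> M \<le> c * v (f x + (\<Sum>j\<in>F. f j))"
  proof (cases "f x = 0 \<or> (\<Sum>j\<in>F. f j) = 0 \<or> f x + (\<Sum>j\<in>F. f j) = 0")
    case True then show ?thesis using a b by auto
  next
    case False
    then have "v (f x + (\<Sum>j\<in>F. f j)) \<ge> min (v (f x)) (v (\<Sum>j\<in>F. f j))" using vultra by blast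
    then have "c * v (f x + (\<Sum>j\<in>F. f j)) \<ge> c * min (v (f x)) (v (\<Sum>j\<in>F. f j))"
      using assms(1) by (simp add: mult_left_mono)
    moreover have "M \<le> c * min (v (f x)) (v (\<Sum>j\<in>F. f j))" using a b False by (simp add: min_def)
    ultimately show ?thesis by simp
  qed
  then show ?case using insert by simp
qed simp_all

lemma coeff_bound_mult:
  assumes c: "c \<ge> 0" and g1: "coeff_bound c Q1 d1" and g2: "coeff_bound c Q2 d2"
  shows "coeff_bound c (Q1 * Q2) (d1 + d2)"
  unfolding coeff_bound_def
proof (intro allI impI)
  fix k assume "coeff (Q1 * Q2) k \<noteq> 0"
  have "(\<Sum>j\<le>k. coeff Q1 j * coeff Q2 (k - j)) = 0 \<or>
      int (d1 + d2) - int k \<le> c * v (\<Sum>j\<le>k. coeff Q1 j * coeff Q2 (k - j))"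
  proof (rule coeff_bound_sum[OF c])
    fix j assume j: "j \<in> {..k}"
    show "coeff Q1 j * coeff Q2 (k - j) = 0 \<or> int (d1 + d2) - int k \<le> c * v (coeff Q1 j * coeff Q2 (k - j))"
    proof (cases "coeff Q1 j = 0 \<or> coeff Q2 (k - j) = 0")
      case False
      then have "int d1 - int j \<le> c * v (coeff Q1 j)" "int d2 - int (k - j) \<le> c * v (coeff Q2 (k - j))"
        using g1 g2 unfolding coeff_bound_def by auto
      moreover have "v (coeff Q1 j * coeff Q2 (k - j)) = v (coeff Q1 j) + v (coeff Q2 (k - j))"
        using False vmult by blast
      moreover have "int (k - j) = int k - int j" using j by simp
      ultimately show ?thesis by (simp add: distrib_left)
    qed simp
  qed
  then show "int (d1 + d2) - int k \<le> c * v (coeff (Q1 * Q2) k)"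
    using \<open>coeff (Q1 * Q2) k \<noteq> 0\<close> by (simp add: coeff_mult)
qed

lemma coeff_bound_one: "coeff_bound c 1 0"
  unfolding coeff_bound_def by (simp add: coeff_1)

lemma coeff_bound_pow: "c \<ge> 0 \<Longrightarrow> coeff_bound c Q d \<Longrightarrow> coeff_bound c (Q ^ r) (d * r)"
proof (induction r)
  case 0 then show ?case by (simp add: coeff_bound_one)
next
  case (Suc r)
  then have "coeff_bound c (Q * Q ^ r) (d + d * r)" by (intro coeff_bound_mult) auto
  then show ?case by simp
qed

end

text \<open>Elements of L[t]/P for P of degree 2 are linear polynomials, and multiplication
  by x on them is given by the companion matrix of P.\<close>

lemma poly_deg_lt2: "degree (x::'k::field poly) < 2 \<Longrightarrow> x = [:coeff x 0, coeff x 1:]"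
  by (rule poly_eqI) (auto simp: coeff_pCons coeff_eq_0 split: nat.splits)

lemma P_form:
  assumes "degree (P::'k::field poly) = 2" "lead_coeff P = 1"
  shows "P = [:coeff P 0, coeff P 1, 1:]"
proof (rule poly_eqI)
  fix k show "coeff P k = coeff [:coeff P 0, coeff P 1, 1:] k"
    using assms by (cases k; cases "k - 1"; cases "k - 2") (auto simp: coeff_eq_0 coeff_pCons numeral_2_eq_2)
qed

lemma xpoly:
  fixes pb pa al be :: "'k::field"
  shows "([:0, 1:] * [:al, be:]) mod [:pb, pa, 1:] = [:- pb * be, al - pa * be:]"
proof -
  have "[:0, 1:] * [:al, be:] = [:- pb * be, al - pa * be:] + smult be [:pb, pa, 1:]"
    by (simp add: algebra_simps)
  moreover have "(x + smult be P) mod P = x mod P" for x P :: "'k poly"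
  proof -
    have "(x + smult be P) mod P = (x mod P + smult be P mod P) mod P" by (simp add: mod_add_eq)
    also have "smult be P mod P = 0" by (simp add: mod_smult_left)
    finally show ?thesis by simp
  qed
  ultimately have "([:0, 1:] * [:al, be:]) mod [:pb, pa, 1:] = [:- pb * be, al - pa * be:] mod [:pb, pa, 1:]"
    by metis
  also have "\<dots> = [:- pb * be, al - pa * be:]"
    by (rule mod_poly_less) (simp add: degree_pCons_eq_if)
  finally show ?thesis .
qed

definition vadd :: "(nat \<Rightarrow> 'k::field poly) \<Rightarrow> (nat \<Rightarrow> 'k poly) \<Rightarrow> (nat \<Rightarrow> 'k poly)" where
  "vadd w u = (\<lambda>i. w i + u i)"

lemma smult_sum_right: "smult a (sum f S) = (\<Sum>i\<in>S. smult a (f i))"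
  by (induction S rule: infinite_finite_induct) (simp_all add: smult_add_right)

lemma lcomb_add: "vadd (lcomb c b n) (lcomb d b n) = lcomb (\<lambda>j. c j + d j) b n"
  unfolding vadd_def lcomb_def by (simp add: sum.distrib smult_add_left)

lemma lcomb_diff: "vdiff (lcomb c b n) (lcomb d b n) = lcomb (\<lambda>j. c j - d j) b n"
  unfolding vdiff_def lcomb_def by (simp add: sum_subtractf smult_diff_left)

lemma lcomb_scale: "vscale a (lcomb c b n) = lcomb (\<lambda>j. a * c j) b n"
  unfolding vscale_def lcomb_def by (simp add: smult_sum_right smult_smult)

lemma lcomb_comp: "lcomb c (\<lambda>j. lcomb (\<lambda>i. M i j) f m) n = lcomb (\<lambda>i. \<Sum>j<n. M i j * c j) f m"
proof (rule ext)
  fix i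
  have "lcomb c (\<lambda>j. lcomb (\<lambda>i. M i j) f m) n i = (\<Sum>j<n. \<Sum>k<m. smult (M k j * c j) (f k i))"
    unfolding lcomb_def by (simp add: smult_sum_right smult_smult mult.commute)
  also have "\<dots> = (\<Sum>k<m. \<Sum>j<n. smult (M k j * c j) (f k i))" by (rule sum.swap)
  also have "\<dots> = lcomb (\<lambda>i. \<Sum>j<n. M i j * c j) f m i"
    unfolding lcomb_def by (simp add: smult_sum)
  finally show "lcomb c (\<lambda>j. lcomb (\<lambda>i. M i j) f m) n i = lcomb (\<lambda>i. \<Sum>j<n. M i j * c j) f m i" .
qed

lemma lcomb_Suc: "lcomb c b (Suc n) = vadd (lcomb c b n) (vscale (c n) (b n))"
  unfolding lcomb_def vadd_def vscale_def by simp

lemma lcomb_unit: "j < n \<Longrightarrow> lcomb (\<lambda>k. if k = j then 1 else 0) b n = b j"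
proof -
  assume j: "j < n"
  have e: "(\<lambda>k. smult (if k = j then 1 else 0) (b k i)) = (\<lambda>k. if k = j then b j i else 0)" for i
    by auto
  show ?thesis unfolding lcomb_def e using j by (simp add: ext)
qed

lemma lcomb_cong: "(\<And>j. j < n \<Longrightarrow> b j = b' j) \<Longrightarrow> lcomb c b n = lcomb c b' n"
  unfolding lcomb_def by simp

lemma lcomb_vadd_basis: "lcomb c (\<lambda>j. vadd (X j) (Y j)) n = vadd (lcomb c X n) (lcomb c Y n)"
  unfolding lcomb_def vadd_def by (simp add: smult_add_right sum.distrib)

lemma lcomb_vscale_basis: "lcomb c (\<lambda>j. vscale a (Y j)) n = vscale a (lcomb c Y n)"
  unfolding lcomb_def vscale_def by (simp add: smult_sum_right mult.commute)

lemma vscale_vscale: "vscale a (vscale b w) = vscale (a * b) w"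
  unfolding vscale_def by simp

lemma vadd_vscale: "vadd (vscale a x) (vscale a y) = vscale a (vadd x y)"
  unfolding vadd_def vscale_def by (simp add: smult_add_right)

lemma poly_mod_sum: "(sum f S) mod (z::'k::field poly) = (\<Sum>i\<in>S. f i mod z)"
  by (induction S rule: infinite_finite_induct) (simp_all add: poly_mod_add_left)

lemma xact_lcomb: "xact P (lcomb c b n) = lcomb c (\<lambda>j. xact P (b j)) n"
  unfolding xact_def lcomb_def
  by (simp only: sum_distrib_left mult_smult_right mod_smult_left poly_mod_sum)

lemma xact_vscale: "xact P (vscale a w) = vscale a (xact P w)"
  unfolding xact_def vscale_def by (simp only: mult_smult_right mod_smult_left)

lemma xact_vdiff: "xact P (vdiff w u) = vdiff (xact P w) (xact P u)"
  unfolding xact_def vdiff_def by (simp only: right_diff_distrib poly_mod_diff_left)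

lemma Vsp_deg: "w \<in> Vsp P r \<Longrightarrow> degree P = 2 \<Longrightarrow> degree (w i) < 2"
  unfolding Vsp_def by (cases "i < r") auto

locale quadratic_setting = valued_field l v for l :: nat and v :: "'k::field \<Rightarrow> int" +
  fixes P :: "'k poly" and r :: nat and pb pa :: 'k
  assumes Pform: "P = [:pb, pa, 1:]" and pbl: "vge 1 pb" and pal: "vge 1 pa"
begin

lemma degP: "degree P = 2" using Pform by simp

lemma xpolyP: "([:0, 1:] * [:al, be:]) mod P = [:- pb * be, al - pa * be:]"
  using xpoly[where pb=pb and pa=pa and al=al and be=be] Pform by simp

lemma xact_square:
  assumes w: "w \<in> Vsp P r"
  shows "xact P (xact P w) = vadd (vscale (- pb) w) (vscale (- pa) (xact P w))"
proof (rule ext)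
  fix i
  have d: "degree (w i) < 2" by (rule Vsp_deg[OF w degP])
  define al be where "al = coeff (w i) 0" and "be = coeff (w i) 1"
  have wi: "w i = [:al, be:]" using poly_deg_lt2[OF d] unfolding al_def be_def .
  have xw: "xact P w i = [:- pb * be, al - pa * be:]" unfolding xact_def wi by (rule xpolyP)
  have xxw: "xact P (xact P w) i = [:- pb * (al - pa * be), - pb * be - pa * (al - pa * be):]"
    unfolding xact_def using xw[unfolded xact_def] by (simp only: xpolyP)
  show "xact P (xact P w) i = vadd (vscale (- pb) w) (vscale (- pa) (xact P w)) i"
    unfolding xxw vadd_def vscale_def xw wi by (simp add: algebra_simps)
qed

text \<open>Every lattice is an S-submodule of V; this is all that is used about lattices in
  the necessity direction.\<close>

definition S_submodule :: "(nat \<Rightarrow> 'k poly) set \<Rightarrow> bool" where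
  "S_submodule T \<longleftrightarrow> (\<lambda>i. 0) \<in> T \<and> (\<forall>w\<in>T. \<forall>u\<in>T. vadd w u \<in> T) \<and>
     (\<forall>w\<in>T. \<forall>a. vge 0 a \<longrightarrow> vscale a w \<in> T) \<and> T \<subseteq> Vsp P r"

lemma lcomb_Vsp:
  assumes "\<forall>j<m. b j \<in> Vsp P r"
  shows "lcomb c b m \<in> Vsp P r"
  unfolding Vsp_def
proof (intro CollectI allI conjI impI)
  fix i assume i: "i < r"
  have "degree (lcomb c b m i) \<le> 1"
    unfolding lcomb_def
  proof (rule degree_sum_le)
    fix j assume "j \<in> {..<m}"
    then have "degree (b j i) < 2" using Vsp_deg[OF _ degP] assms by auto
    then show "degree (smult (c j) (b j i)) \<le> 1" using degree_smult_le[of "c j" "b j i"] by linarith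
  qed simp
  then show "degree (lcomb c b m i) < degree P" using degP by simp
next
  fix i assume i: "r \<le> i"
  then show "lcomb c b m i = 0" using assms unfolding lcomb_def Vsp_def by auto
qed

lemma lattice_S_submodule:
  assumes "is_lattice v P r T" shows "S_submodule T"
proof -
  obtain b where b: "\<forall>j<2*r. b j \<in> Vsp P r" and T: "T = {lcomb c b (2*r) | c. \<forall>j<2*r. inS v (c j)}"
    using assms unfolding is_lattice_def by blast
  have "lcomb (\<lambda>_. 0) b (2*r) = (\<lambda>i. 0)" unfolding lcomb_def by simp
  then have z: "(\<lambda>i. 0) \<in> T" unfolding T by (intro CollectI exI[of _ "\<lambda>_. 0"] conjI) simp_all
  have a: "\<forall>w\<in>T. \<forall>u\<in>T. vadd w u \<in> T"
  proof (intro ballI)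
    fix w u assume "w \<in> T" "u \<in> T"
    then obtain c d where c: "w = lcomb c b (2*r)" "\<forall>j<2*r. vge 0 (c j)"
      and d: "u = lcomb d b (2*r)" "\<forall>j<2*r. vge 0 (d j)" unfolding T by auto
    have "vadd w u = lcomb (\<lambda>j. c j + d j) b (2*r)" unfolding c d lcomb_add ..
    moreover have "\<forall>j<2*r. inS v (c j + d j)" using c d by (simp add: vge_add)
    ultimately show "vadd w u \<in> T" unfolding T by blast
  qed
  have s: "\<forall>w\<in>T. \<forall>a. vge 0 a \<longrightarrow> vscale a w \<in> T"
  proof (intro ballI allI impI)
    fix w a assume "w \<in> T" "vge 0 a"
    then obtain c where c: "w = lcomb c b (2*r)" "\<forall>j<2*r. vge 0 (c j)" unfolding T by auto
    have "vscale a w = lcomb (\<lambda>j. a * c j) b (2*r)" unfolding c lcomb_scale ..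
    moreover have "\<forall>j<2*r. inS v (a * c j)" using c \<open>vge 0 a\<close> by (simp add: vge_mult0)
    ultimately show "vscale a w \<in> T" unfolding T by blast
  qed
  have "T \<subseteq> Vsp P r" unfolding T using lcomb_Vsp[OF b] by blast
  then show ?thesis using z a s unfolding S_submodule_def by blast
qed

lemma lcomb_in:
  assumes "S_submodule T" "\<forall>j<m. e j \<in> T" "\<forall>j<m. vge 0 (d j)"
  shows "lcomb d e m \<in> T"
  using assms(2,3)
proof (induction m)
  case 0
  have "lcomb d e 0 = (\<lambda>i. 0)" unfolding lcomb_def by simp
  then show ?case using assms(1) unfolding S_submodule_def by simp
next
  case (Suc m)
  have "lcomb d e m \<in> T" using Suc by simp
  moreover have "vscale (d m) (e m) \<in> T" using Suc assms(1) unfolding S_submodule_def by simp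
  ultimately show ?case unfolding lcomb_Suc using assms(1) unfolding S_submodule_def by blast
qed

abbreviation LL :: 'k where "LL \<equiv> of_nat l"

lemma lT_iff: "x \<in> lT l T \<longleftrightarrow> (\<exists>t\<in>T. x = vscale LL t)"
  unfolding lT_def by auto

lemma vscale_small_lT:
  assumes "S_submodule T" "w \<in> T" "vge 1 a" shows "vscale a w \<in> lT l T"
proof -
  have "vscale a w = vscale LL (vscale (a / LL) w)" using l0 unfolding vscale_vscale by simp
  moreover have "vscale (a / LL) w \<in> T" using assms vge_div_l[of 0 a] unfolding S_submodule_def by simp
  ultimately show ?thesis unfolding lT_iff by blast
qed

lemma lT_add: "S_submodule T \<Longrightarrow> x \<in> lT l T \<Longrightarrow> y \<in> lT l T \<Longrightarrow> vadd x y \<in> lT l T"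
proof -
  assume S: "S_submodule T" and "x \<in> lT l T" "y \<in> lT l T"
  then obtain t1 t2 where t: "t1 \<in> T" "x = vscale LL t1" "t2 \<in> T" "y = vscale LL t2" unfolding lT_iff by blast
  then have "vadd x y = vscale LL (vadd t1 t2)" by (simp add: vadd_vscale)
  moreover have "vadd t1 t2 \<in> T" using S t unfolding S_submodule_def by blast
  ultimately show ?thesis unfolding lT_iff by blast
qed

lemma lT_scale: "S_submodule T \<Longrightarrow> x \<in> lT l T \<Longrightarrow> vge 0 a \<Longrightarrow> vscale a x \<in> lT l T"
proof -
  assume S: "S_submodule T" and "x \<in> lT l T" and a: "vge 0 a"
  then obtain t where t: "t \<in> T" "x = vscale LL t" unfolding lT_iff by blast
  then have "vscale a x = vscale LL (vscale a t)" by (simp add: vscale_vscale mult.commute)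
  moreover have "vscale a t \<in> T" using S t a unfolding S_submodule_def by blast
  ultimately show ?thesis unfolding lT_iff by blast
qed

lemma lT_xact: "S_submodule T \<Longrightarrow> x_stable P T \<Longrightarrow> x \<in> lT l T \<Longrightarrow> xact P x \<in> lT l T"
proof -
  assume S: "S_submodule T" and X: "x_stable P T" and "x \<in> lT l T"
  then obtain t where t: "t \<in> T" "x = vscale LL t" unfolding lT_iff by blast
  then have "xact P x = vscale LL (xact P t)" by (simp add: xact_vscale)
  moreover have "xact P t \<in> T" using X t unfolding x_stable_def by blast
  ultimately show ?thesis unfolding lT_iff by blast
qed

lemma lcomb_small_lT:
  assumes "S_submodule T" "\<forall>j<m. e j \<in> T" "\<forall>j<m. vge 1 (c j)"
  shows "lcomb c e m \<in> lT l T"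
proof -
  have "lcomb c e m = vscale LL (lcomb (\<lambda>j. c j / LL) e m)" unfolding lcomb_scale using l0 by simp
  moreover have "lcomb (\<lambda>j. c j / LL) e m \<in> T"
    using assms vge_div_l[of 0] by (intro lcomb_in) auto
  ultimately show ?thesis unfolding lT_iff by blast
qed

definition cong_lT :: "(nat \<Rightarrow> 'k poly) set \<Rightarrow> (nat \<Rightarrow> 'k poly) \<Rightarrow> (nat \<Rightarrow> 'k poly) \<Rightarrow> bool" where
  "cong_lT T w u \<longleftrightarrow> vdiff w u \<in> lT l T"

lemma cong_lT_sym: "S_submodule T \<Longrightarrow> cong_lT T w u \<Longrightarrow> cong_lT T u w"
proof -
  assume "S_submodule T" "cong_lT T w u"
  then have "vscale (-1) (vdiff w u) \<in> lT l T" unfolding cong_lT_def by (intro lT_scale) auto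
  moreover have "vscale (-1) (vdiff w u) = vdiff u w" unfolding vscale_def vdiff_def by auto
  ultimately show ?thesis unfolding cong_lT_def by simp
qed

lemma cong_lT_trans: "S_submodule T \<Longrightarrow> cong_lT T w u \<Longrightarrow> cong_lT T u z \<Longrightarrow> cong_lT T w z"
proof -
  assume "S_submodule T" "cong_lT T w u" "cong_lT T u z"
  then have "vadd (vdiff w u) (vdiff u z) \<in> lT l T" unfolding cong_lT_def by (intro lT_add)
  moreover have "vadd (vdiff w u) (vdiff u z) = vdiff w z" unfolding vadd_def vdiff_def by auto
  ultimately show ?thesis unfolding cong_lT_def by simp
qed

lemma cong_lT_xact: "S_submodule T \<Longrightarrow> x_stable P T \<Longrightarrow> cong_lT T w u \<Longrightarrow> cong_lT T (xact P w) (xact P u)"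
  unfolding cong_lT_def xact_vdiff[symmetric] by (rule lT_xact)

lemma cong_lT_lT: "cong_lT T w (\<lambda>i. 0) \<longleftrightarrow> w \<in> lT l T"
  unfolding cong_lT_def vdiff_def by simp

lemma cong_lT_lT': "S_submodule T \<Longrightarrow> cong_lT T w u \<Longrightarrow> u \<in> lT l T \<Longrightarrow> w \<in> lT l T"
  using cong_lT_trans[of T w u "\<lambda>i. 0"] cong_lT_lT by metis

end

section \<open>Necessity: the reduction of x on a stable lattice\<close>

context quadratic_setting
begin

lemma xact_lcomb_cong:
  assumes S: "S_submodule T" and eT: "\<forall>j<n. e j \<in> T" and AM: "acts_by_matrix l P T n e N"
    and c: "\<forall>j<n. vge 0 (c j)"
  shows "cong_lT T (xact P (lcomb c e n)) (lcomb (mv n N c) e n)"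
proof -
  have "\<forall>j. \<exists>t. j < n \<longrightarrow> t \<in> T \<and> vdiff (xact P (e j)) (lcomb (\<lambda>i. N i j) e n) = vscale LL t"
    using AM unfolding acts_by_matrix_def lT_iff by metis
  then obtain t where t: "\<And>j. j < n \<Longrightarrow> t j \<in> T \<and> vdiff (xact P (e j)) (lcomb (\<lambda>i. N i j) e n) = vscale LL (t j)"
    by metis
  have xe: "xact P (e j) = vadd (lcomb (\<lambda>i. N i j) e n) (vscale LL (t j))" if "j < n" for j
  proof (rule ext)
    fix i
    have "vdiff (xact P (e j)) (lcomb (\<lambda>i. N i j) e n) i = vscale LL (t j) i" using t[OF that] by simp
    then show "xact P (e j) i = vadd (lcomb (\<lambda>i. N i j) e n) (vscale LL (t j)) i"
      unfolding vdiff_def vadd_def by (simp add: algebra_simps)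
  qed
  have "xact P (lcomb c e n) = lcomb c (\<lambda>j. vadd (lcomb (\<lambda>i. N i j) e n) (vscale LL (t j))) n"
    unfolding xact_lcomb by (rule lcomb_cong) (simp add: xe)
  also have "\<dots> = vadd (lcomb (mv n N c) e n) (vscale LL (lcomb c t n))"
    unfolding lcomb_vadd_basis lcomb_vscale_basis lcomb_comp mv_def ..
  finally have eq: "xact P (lcomb c e n) = vadd (lcomb (mv n N c) e n) (vscale LL (lcomb c t n))" .
  have "lcomb c t n \<in> T" using t c by (intro lcomb_in[OF S]) auto
  moreover have "vdiff (xact P (lcomb c e n)) (lcomb (mv n N c) e n) = vscale LL (lcomb c t n)"
    unfolding eq vdiff_def vadd_def by simp
  ultimately show ?thesis unfolding cong_lT_def lT_iff by blast
qed

text \<open>Since x^2 = -pb - pa x maps T into l T, the matrix N is square-zero modulo l.\<close>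

lemma matrix_square_zero:
  assumes S: "S_submodule T" and X: "x_stable P T" and eT: "\<forall>j<n. e j \<in> T" and AM: "acts_by_matrix l P T n e N"
    and ind: "\<forall>c. (\<forall>j<n. vge 0 (c j)) \<and> lcomb c e n \<in> lT l T \<longrightarrow> (\<forall>j<n. vge 1 (c j))"
    and NS: "Smat n n N"
  shows "mcong n n (matmul n N N) (\<lambda>_ _. 0)"
  unfolding mcong_def
proof (intro allI impI)
  fix i j assume i: "i < n" and j: "j < n"
  define u where "u = (\<lambda>k. if k = j then 1 else (0::'k))"
  define col where "col = (\<lambda>i. N i j)"
  have Eu: "lcomb u e n = e j" unfolding u_def by (rule lcomb_unit[OF j])
  have ET: "e j \<in> T" using eT j by simp
  have EV: "e j \<in> Vsp P r" using S ET unfolding S_submodule_def by blast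
  have xET: "xact P (e j) \<in> T" using X ET unfolding x_stable_def by blast
  have "vadd (vscale (- pb) (e j)) (vscale (- pa) (xact P (e j))) \<in> lT l T"
    by (intro lT_add[OF S] vscale_small_lT[OF S] ET xET) (simp_all add: pbl pal)
  then have xxE: "xact P (xact P (e j)) \<in> lT l T" using xact_square[OF EV] by simp
  have uS: "\<forall>k<n. vge 0 (u k)" by (simp add: u_def)
  have "cong_lT T (xact P (lcomb u e n)) (lcomb (mv n N u) e n)" by (rule xact_lcomb_cong[OF S eT AM uS])
  moreover have "mv n N u = col" unfolding u_def col_def by (rule mv_unit[OF j])
  ultimately have "cong_lT T (xact P (e j)) (lcomb col e n)" unfolding Eu by simp
  then have "cong_lT T (xact P (xact P (e j))) (xact P (lcomb col e n))" by (rule cong_lT_xact[OF S X])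
  moreover have "cong_lT T (xact P (lcomb col e n)) (lcomb (mv n N col) e n)"
    by (rule xact_lcomb_cong[OF S eT AM]) (use NS j in \<open>simp add: Smat_def col_def\<close>)
  ultimately have "cong_lT T (xact P (xact P (e j))) (lcomb (mv n N col) e n)" by (rule cong_lT_trans[OF S])
  then have "cong_lT T (lcomb (mv n N col) e n) (xact P (xact P (e j)))" by (rule cong_lT_sym[OF S])
  then have "lcomb (mv n N col) e n \<in> lT l T" using cong_lT_lT'[OF S _ xxE] by blast
  moreover have "mv n N col = (\<lambda>i. matmul n N N i j)" unfolding mv_def matmul_def col_def ..
  moreover have "\<forall>i<n. vge 0 (matmul n N N i j)" using Smat_mult[OF NS NS] j unfolding Smat_def by blast
  ultimately have "\<forall>i<n. vge 1 (matmul n N N i j)" using ind by metis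
  then show "vge 1 (matmul n N N i j - 0)" using i by simp
qed

text \<open>When v(pb) = 1 the element pb / l is a unit, and the relation l x t = -pb w - pa l t
  (from x^2 = -pb - pa x with x w = l t) solves w = x s mod l T: a vector of T killed by
  x modulo l is in the image of x modulo l.\<close>

lemma xact_kernel_in_image:
  assumes S: "S_submodule T" and wT: "w \<in> T" and xwl: "xact P w \<in> lT l T"
    and pb0: "pb \<noteq> 0" and vpb: "v pb = 1"
  shows "\<exists>s\<in>T. cong_lT T w (xact P s)"
proof -
  have wV: "w \<in> Vsp P r" using S wT unfolding S_submodule_def by blast
  obtain t where tT: "t \<in> T" and xw: "xact P w = vscale LL t" using xwl unfolding lT_iff by blast
  define b' where "b' = pb / LL"
  have b'0: "b' \<noteq> 0" using pb0 l0 unfolding b'_def by simp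
  have "v b' = 0" using vmult[of pb "inverse LL"] vinv[OF l0] vl pb0 l0 vpb unfolding b'_def
    by (simp add: divide_inverse)
  then have b'S: "vge 0 b'" "\<not> vge 1 b'" using b'0 unfolding vge_def by auto
  define kap where "kap = - (1 / b')"
  have kapS: "vge 0 kap" unfolding kap_def using vge_div_unit[OF _ b'S, of 0 1] by simp
  define s where "s = vscale kap t"
  have sT: "s \<in> T" using S tT kapS unfolding s_def S_submodule_def by blast
  have "xact P (xact P w) = vscale LL (xact P t)" unfolding xw xact_vscale ..
  then have E2: "vscale LL (xact P t) = vadd (vscale (- pb) w) (vscale (- pa) (vscale LL t))"
    using xact_square[OF wV] xw by simp
  have weq: "w = vadd (xact P s) (vscale (- (pa / b')) t)"
  proof (rule ext)
    fix i
    have Ei: "smult LL (xact P t i) = smult (- pb) (w i) + smult (- pa) (smult LL (t i))"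
      using fun_cong[OF E2, of i] unfolding vscale_def vadd_def .
    have "w i = smult (- (1 / pb)) (smult (- pb) (w i))" using pb0 by simp
    also have "smult (- pb) (w i) = smult LL (xact P t i) - smult (- pa) (smult LL (t i))" using Ei by simp
    finally have "w i = smult (- (LL / pb)) (xact P t i) + smult (- (pa * LL / pb)) (t i)"
      by (simp add: smult_diff_right smult_add_right smult_smult)
    moreover have "xact P s i = smult kap (xact P t i)" unfolding s_def xact_vscale by (simp add: vscale_def)
    moreover have "kap = - (LL / pb)" "pa / b' = pa * LL / pb" unfolding kap_def b'_def using l0 pb0 by simp_all
    ultimately show "w i = vadd (xact P s) (vscale (- (pa / b')) t) i" unfolding vadd_def vscale_def by simp
  qed
  have "vge 1 (- (pa / b'))" using vge_div_unit[OF pal b'S] by simp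
  then have "vscale (- (pa / b')) t \<in> lT l T" by (rule vscale_small_lT[OF S tT])
  moreover have "vdiff w (xact P s) = vscale (- (pa / b')) t"
    by (subst weq) (auto simp: vdiff_def vadd_def)
  ultimately show ?thesis using sT unfolding cong_lT_def by metis
qed

lemma matrix_ker_in_image:
  assumes S: "S_submodule T" and X: "x_stable P T" and eT: "\<forall>j<n. e j \<in> T"
    and AM: "acts_by_matrix l P T n e N"
    and ind: "\<forall>c. (\<forall>j<n. vge 0 (c j)) \<and> lcomb c e n \<in> lT l T \<longrightarrow> (\<forall>j<n. vge 1 (c j))"
    and span: "\<forall>w\<in>T. \<exists>c. (\<forall>j<n. vge 0 (c j)) \<and> vdiff w (lcomb c e n) \<in> lT l T"
    and NS: "Smat n n N" and pb0: "pb \<noteq> 0" and vpb: "v pb = 1"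
  shows "ker_in_image n N"
  unfolding ker_in_image_def
proof (intro allI impI, elim conjE)
  fix c assume cS: "Svec n c" and Nc: "zero_mod n (mv n N c)"
  have cS': "\<forall>j<n. vge 0 (c j)" using cS unfolding Svec_def by simp
  define w where "w = lcomb c e n"
  have wT: "w \<in> T" unfolding w_def using lcomb_in[OF S] eT cS' by blast
  have "lcomb (mv n N c) e n \<in> lT l T" using lcomb_small_lT[OF S eT] Nc unfolding zero_mod_def by blast
  then have "xact P w \<in> lT l T" using cong_lT_lT'[OF S xact_lcomb_cong[OF S eT AM cS']] unfolding w_def by blast
  then obtain s where sT: "s \<in> T" and ws: "cong_lT T w (xact P s)"
    using xact_kernel_in_image[OF S wT _ pb0 vpb] by blast
  obtain d where dS: "\<forall>j<n. vge 0 (d j)" and sd: "cong_lT T s (lcomb d e n)"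
    using span sT unfolding cong_lT_def by blast
  have "cong_lT T w (xact P (lcomb d e n))" by (rule cong_lT_trans[OF S ws cong_lT_xact[OF S X sd]])
  then have "cong_lT T w (lcomb (mv n N d) e n)" using xact_lcomb_cong[OF S eT AM dS] by (rule cong_lT_trans[OF S])
  then have "lcomb (\<lambda>j. c j - mv n N d j) e n \<in> lT l T" unfolding cong_lT_def w_def lcomb_diff .
  moreover have "\<forall>j<n. vge 0 (c j - mv n N d j)"
    using cS' Svec_mv[OF NS, of d] dS unfolding Svec_def by (auto intro: vge_diff)
  ultimately have "\<forall>j<n. vge 1 (c j - mv n N d j)"
    using spec[OF ind, of "\<lambda>j. c j - mv n N d j"] by blast
  then show "\<exists>d. Svec n d \<and> zero_mod n (\<lambda>i. c i - mv n N d i)"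
    using dS unfolding Svec_def zero_mod_def by blast
qed

end

section \<open>Sufficiency: an explicit lattice realising the Jordan matrix\<close>

text \<open>For p \<le> r, the standard lattice has S-basis
    x, 1 in the first p summands (indices 2i, 2i+1 for i < p) and
    1, x/l in the remaining r - p summands.
  On the first kind x acts by (x, 1) -> (-pb 1 - pa x, x), which is a 2-block mod l;
  on the second kind by (1, x/l) -> (l x/l, -(pb/l) 1 - pa x/l), which is zero mod l
  provided v(pb) >= 2.\<close>

context quadratic_setting
begin

definition std_basis_poly :: "nat \<Rightarrow> nat \<Rightarrow> 'k poly" where
  "std_basis_poly p j = (if j < 2*p then (if even j then [:0, 1:] else 1) else (if even j then 1 else [:0, 1 / LL:]))"

definition std_basis :: "nat \<Rightarrow> nat \<Rightarrow> nat \<Rightarrow> 'k poly" where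
  "std_basis p j = (\<lambda>i. if i = j div 2 then std_basis_poly p j else 0)"

definition std_component :: "nat \<Rightarrow> (nat \<Rightarrow> 'k) \<Rightarrow> nat \<Rightarrow> 'k poly" where
  "std_component p c i = (if i < p then [:c (2*i+1), c (2*i):] else [:c (2*i), c (2*i+1) / LL:])"

lemma lcomb_std_basis: "lcomb c (std_basis p) (2*r) i = (if i < r then std_component p c i else 0)"
proof -
  have "lcomb c (std_basis p) (2*r) i = (\<Sum>k<r. smult (c (2*k)) (std_basis p (2*k) i) + smult (c (2*k+1)) (std_basis p (2*k+1) i))"
    unfolding lcomb_def by (rule sum_2p)
  also have "\<dots> = (\<Sum>k<r. if k = i then smult (c (2*i)) (std_basis_poly p (2*i)) + smult (c (2*i+1)) (std_basis_poly p (2*i+1)) else 0)"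
    by (intro sum.cong) (auto simp: std_basis_def)
  also have "\<dots> = (if i < r then smult (c (2*i)) (std_basis_poly p (2*i)) + smult (c (2*i+1)) (std_basis_poly p (2*i+1)) else 0)"
    by (simp add: sum.delta)
  also have "\<dots> = (if i < r then std_component p c i else 0)"
    by (auto simp: std_basis_poly_def std_component_def)
  finally show ?thesis .
qed

lemma std_component_inj:
  assumes "std_component p c i = std_component p c' i"
  shows "c (2*i) = c' (2*i) \<and> c (2*i+1) = c' (2*i+1)"
  using assms l0 unfolding std_component_def by (auto split: if_splits)

lemma std_coords_unique:
  assumes "lcomb c (std_basis p) (2*r) = lcomb c' (std_basis p) (2*r)" "j < 2*r"
  shows "c j = c' j"
proof -
  have i: "j div 2 < r" using assms(2) by simp
  have "std_component p c (j div 2) = std_component p c' (j div 2)"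
    using fun_cong[OF assms(1), of "j div 2"] i unfolding lcomb_std_basis by simp
  from std_component_inj[OF this] show ?thesis by (cases "even j") auto
qed

lemma std_basis_Vsp: "j < 2*r \<Longrightarrow> std_basis p j \<in> Vsp P r"
  unfolding Vsp_def std_basis_def std_basis_poly_def using degP by auto

definition std_coords :: "nat \<Rightarrow> (nat \<Rightarrow> 'k poly) \<Rightarrow> nat \<Rightarrow> 'k" where
  "std_coords p w j = (if j < 2*r then (if j < 2*p then (if even j then coeff (w (j div 2)) 1 else coeff (w (j div 2)) 0)
      else (if even j then coeff (w (j div 2)) 0 else LL * coeff (w (j div 2)) 1)) else 0)"

lemma std_coords_lcomb:
  assumes w: "w \<in> Vsp P r"
  shows "lcomb (std_coords p w) (std_basis p) (2*r) = w"
proof (rule ext)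
  fix i
  show "lcomb (std_coords p w) (std_basis p) (2*r) i = w i"
  proof (cases "i < r")
    case True
    have "w i = [:coeff (w i) 0, coeff (w i) 1:]" by (rule poly_deg_lt2[OF Vsp_deg[OF w degP]])
    moreover have "(2*i+1) div 2 = i" by simp
    ultimately show ?thesis unfolding lcomb_std_basis using True l0 by (auto simp: std_component_def std_coords_def)
  next
    case False
    then show ?thesis unfolding lcomb_std_basis using w unfolding Vsp_def by auto
  qed
qed

definition std_lattice :: "nat \<Rightarrow> (nat \<Rightarrow> 'k poly) set" where
  "std_lattice p = {lcomb c (std_basis p) (2*r) | c. \<forall>j<2*r. inS v (c j)}"

lemma std_lattice_lattice: "is_lattice v P r (std_lattice p)"
  unfolding is_lattice_def
proof (intro exI[of _ "std_basis p"] conjI)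
  show "\<forall>j<2*r. std_basis p j \<in> Vsp P r" using std_basis_Vsp by blast
  show "\<forall>w\<in>Vsp P r. \<exists>!c. (\<forall>j\<ge>2*r. c j = 0) \<and> w = lcomb c (std_basis p) (2*r)"
  proof
    fix w assume w: "w \<in> Vsp P r"
    show "\<exists>!c. (\<forall>j\<ge>2*r. c j = 0) \<and> w = lcomb c (std_basis p) (2*r)"
    proof (rule ex1I[of _ "std_coords p w"])
      show "(\<forall>j\<ge>2*r. std_coords p w j = 0) \<and> w = lcomb (std_coords p w) (std_basis p) (2*r)"
        using std_coords_lcomb[OF w] by (simp add: std_coords_def)
    next
      fix c assume c: "(\<forall>j\<ge>2*r. c j = 0) \<and> w = lcomb c (std_basis p) (2*r)"
      show "c = std_coords p w"
      proof (rule ext)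
        fix j show "c j = std_coords p w j"
        proof (cases "j < 2*r")
          case True
          then show ?thesis using std_coords_unique[of c p "std_coords p w" j] c std_coords_lcomb[OF w] by simp
        next
          case False
          then show ?thesis using c by (simp add: std_coords_def)
        qed
      qed
    qed
  qed
qed (simp add: std_lattice_def)

lemma std_lattice_mem: "lcomb c (std_basis p) (2*r) \<in> std_lattice p \<longleftrightarrow> (\<forall>j<2*r. vge 0 (c j))"
proof
  assume "lcomb c (std_basis p) (2*r) \<in> std_lattice p"
  then obtain c' where c': "lcomb c (std_basis p) (2*r) = lcomb c' (std_basis p) (2*r)" "\<forall>j<2*r. vge 0 (c' j)"
    unfolding std_lattice_def by auto
  then show "\<forall>j<2*r. vge 0 (c j)" using std_coords_unique[OF c'(1)] by simp
qed (auto simp: std_lattice_def)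

lemma std_lattice_lT: "lcomb c (std_basis p) (2*r) \<in> lT l (std_lattice p) \<longleftrightarrow> (\<forall>j<2*r. vge 1 (c j))"
proof
  assume "lcomb c (std_basis p) (2*r) \<in> lT l (std_lattice p)"
  then obtain c' where c': "lcomb c (std_basis p) (2*r) = vscale LL (lcomb c' (std_basis p) (2*r))" "\<forall>j<2*r. vge 0 (c' j)"
    unfolding lT_iff std_lattice_def by auto
  then have "lcomb c (std_basis p) (2*r) = lcomb (\<lambda>j. LL * c' j) (std_basis p) (2*r)" by (simp add: lcomb_scale)
  then have "c j = LL * c' j" if "j < 2*r" for j using std_coords_unique that by blast
  then show "\<forall>j<2*r. vge 1 (c j)" using c'(2) vge_l_mult[of 0] by simp
next
  assume c: "\<forall>j<2*r. vge 1 (c j)"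
  have "lcomb c (std_basis p) (2*r) = vscale LL (lcomb (\<lambda>j. c j / LL) (std_basis p) (2*r))"
    unfolding lcomb_scale using l0 by simp
  moreover have "lcomb (\<lambda>j. c j / LL) (std_basis p) (2*r) \<in> std_lattice p"
    unfolding std_lattice_mem using c vge_div_l[of 0] by simp
  ultimately show "lcomb c (std_basis p) (2*r) \<in> lT l (std_lattice p)" unfolding lT_iff by blast
qed

definition std_xcoords :: "nat \<Rightarrow> (nat \<Rightarrow> 'k) \<Rightarrow> nat \<Rightarrow> 'k" where
  "std_xcoords p c j = (if j < 2*p then (if even j then c (j+1) - pa * c j else - pb * c (j - 1))
      else (if even j then - (pb / LL) * c (j+1) else LL * c (j - 1) - pa * c j))"

lemma xact_std_basis: "xact P (lcomb c (std_basis p) (2*r)) = lcomb (std_xcoords p c) (std_basis p) (2*r)"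
proof (rule ext)
  fix i
  show "xact P (lcomb c (std_basis p) (2*r)) i = lcomb (std_xcoords p c) (std_basis p) (2*r) i"
  proof (cases "i < r")
    case True
    have "xact P (lcomb c (std_basis p) (2*r)) i = ([:0, 1:] * std_component p c i) mod P"
      unfolding xact_def lcomb_std_basis using True by simp
    also have "\<dots> = std_component p (std_xcoords p c) i"
    proof (cases "i < p")
      case True
      have "std_component p c i = [:c (2*i+1), c (2*i):]" using True by (simp add: std_component_def)
      then have "([:0, 1:] * std_component p c i) mod P = [:- pb * c (2*i), c (2*i+1) - pa * c (2*i):]"
        by (simp only: xpolyP)
      moreover have "std_component p (std_xcoords p c) i = [:- pb * c (2*i), c (2*i+1) - pa * c (2*i):]"
        using True by (simp add: std_component_def std_xcoords_def)
      ultimately show ?thesis by simp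
    next
      case False
      have "std_component p c i = [:c (2*i), c (2*i+1) / LL:]" using False by (simp add: std_component_def)
      then have "([:0, 1:] * std_component p c i) mod P = [:- pb * (c (2*i+1) / LL), c (2*i) - pa * (c (2*i+1) / LL):]"
        by (simp only: xpolyP)
      moreover have "std_component p (std_xcoords p c) i = [:- pb * (c (2*i+1) / LL), c (2*i) - pa * (c (2*i+1) / LL):]"
        using False l0 by (simp add: std_component_def std_xcoords_def field_simps)
      ultimately show ?thesis by simp
    qed
    finally show ?thesis unfolding lcomb_std_basis using True by simp
  next
    case False
    then show ?thesis unfolding xact_def lcomb_std_basis by simp
  qed
qed

lemma std_xcoords_S:
  assumes c: "\<forall>j<2*r. vge 0 (c j)" and j: "j < 2*r"
  shows "vge 0 (std_xcoords p c j)"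
proof -
  have pb0: "vge 0 pb" "vge 0 (- pb)" and pa0: "vge 0 pa" and L0: "vge 0 LL"
    using pbl pal vge_l vge_mono by auto
  have pbL: "vge 0 (- (pb / LL))" using vge_div_l[of 0 pb] pbl by simp
  show ?thesis
  proof (cases "even j")
    case True
    then have j1: "j + 1 < 2*r" using j by presburger
    show ?thesis
    proof (cases "j < 2*p")
      case True
      have "std_xcoords p c j = c (j+1) - pa * c j" unfolding std_xcoords_def using True \<open>even j\<close> by simp
      then show ?thesis using c j j1 pa0 by (simp add: vge_diff vge_mult0)
    next
      case False
      have "std_xcoords p c j = - (pb / LL) * c (j+1)" unfolding std_xcoords_def using False \<open>even j\<close> by simp
      moreover have "vge 0 (- (pb / LL) * c (j+1))" using c j1 pbL by (intro vge_mult0) auto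
      ultimately show ?thesis by simp
    qed
  next
    case False
    have j1: "j - 1 < 2*r" using j by simp
    show ?thesis
    proof (cases "j < 2*p")
      case True
      have "std_xcoords p c j = - pb * c (j - 1)" unfolding std_xcoords_def using True False by simp
      then show ?thesis using c j1 pb0 vge_mult0 by simp
    next
      case tail: False
      have "std_xcoords p c j = LL * c (j - 1) - pa * c j" unfolding std_xcoords_def using tail False by simp
      then show ?thesis using c j j1 pa0 L0 by (simp add: vge_diff vge_mult0)
    qed
  qed
qed

lemma std_lattice_stable: "x_stable P (std_lattice p)"
  unfolding x_stable_def std_lattice_def
proof
  fix w assume "w \<in> {lcomb c (std_basis p) (2*r) | c. \<forall>j<2*r. inS v (c j)}"
  then obtain c where c: "w = lcomb c (std_basis p) (2*r)" "\<forall>j<2*r. vge 0 (c j)" by auto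
  have "xact P w = lcomb (std_xcoords p c) (std_basis p) (2*r)" unfolding c xact_std_basis ..
  moreover have "\<forall>j<2*r. inS v (std_xcoords p c j)" using std_xcoords_S c(2) by simp
  ultimately show "xact P w \<in> {lcomb c (std_basis p) (2*r) | c. \<forall>j<2*r. inS v (c j)}" by blast
qed

lemma mv_jordan2: "p \<le> r \<Longrightarrow> mv (2*r) (jordan2 p) c j = (if even j \<and> j + 1 < 2*p then c (j+1) else 0)"
proof -
  assume pr: "p \<le> r"
  have e: "(\<lambda>s. jordan2 p j s * c s) = (\<lambda>s. if s = Suc j \<and> (even j \<and> j + 1 < 2*p) then c (Suc j) else 0)"
  proof (rule ext)
    fix s show "jordan2 p j s * c s = (if s = Suc j \<and> (even j \<and> j + 1 < 2*p) then c (Suc j) else 0)"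
      by (cases "s = Suc j") (auto simp: jordan2_def)
  qed
  show ?thesis unfolding mv_def e using pr by auto
qed

lemma std_xcoords_cong:
  assumes c: "\<forall>j<2*r. vge 0 (c j)" and pr: "2*p \<le> 2*r" and G: "2*p < 2*r \<Longrightarrow> vge 2 pb" and j: "j < 2*r"
  shows "vge 1 (std_xcoords p c j - mv (2*r) (jordan2 p) c j)"
proof -
  have pr': "p \<le> r" using pr by simp
  have pb0: "vge 0 pb" and pa0: "vge 0 pa" and L0: "vge 0 LL"
    using pbl pal vge_l vge_mono by auto
  show ?thesis
  proof (cases "even j")
    case True
    then have j1: "j + 1 < 2*r" using j by presburger
    show ?thesis
    proof (cases "j < 2*p")
      case True
      then have "j + 1 < 2*p" using \<open>even j\<close> by presburger
      then have "std_xcoords p c j - mv (2*r) (jordan2 p) c j = - (pa * c j)"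
        unfolding std_xcoords_def mv_jordan2[OF pr'] using True \<open>even j\<close> by simp
      then show ?thesis using c j pal vge_mult0' by simp
    next
      case False
      have pbL: "vge 1 (pb / LL)" using vge_div_l[of 1 pb] G False j by simp
      have "std_xcoords p c j - mv (2*r) (jordan2 p) c j = - (pb / LL) * c (j+1)"
        unfolding std_xcoords_def mv_jordan2[OF pr'] using False \<open>even j\<close> by simp
      moreover have "vge 1 (- (pb / LL) * c (j+1))" using c j1 pbL by (intro vge_mult0') auto
      ultimately show ?thesis by simp
    qed
  next
    case False
    have j1: "j - 1 < 2*r" using j by simp
    show ?thesis
    proof (cases "j < 2*p")
      case True
      have "std_xcoords p c j - mv (2*r) (jordan2 p) c j = - pb * c (j - 1)"
        unfolding std_xcoords_def mv_jordan2[OF pr'] using True False by simp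
      moreover have "vge 1 (- pb * c (j - 1))" using c j1 pbl by (intro vge_mult0') auto
      ultimately show ?thesis by simp
    next
      case tail: False
      have "std_xcoords p c j - mv (2*r) (jordan2 p) c j = LL * c (j - 1) - pa * c j"
        unfolding std_xcoords_def mv_jordan2[OF pr'] using tail False by simp
      moreover have "vge 1 (LL * c (j - 1) - pa * c j)"
        using c j j1 pal vge_l by (intro vge_diff vge_mult0') auto
      ultimately show ?thesis by simp
    qed
  qed
qed

lemma std_lattice_transported_basis:
  assumes AS: "Smat (2*r) (2*r) A" and BS: "Smat (2*r) (2*r) B"
    and AB: "mcong (2*r) (2*r) (matmul (2*r) A B) Imat" and BA: "mcong (2*r) (2*r) (matmul (2*r) B A) Imat"
  shows "quot_basis l v (std_lattice p) (2*r) (\<lambda>j. lcomb (\<lambda>i. A i j) (std_basis p) (2*r))"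
proof -
  define n where "n = 2*r"
  define e where "e j = lcomb (\<lambda>i. A i j) (std_basis p) n" for j
  have ecomb: "lcomb d e n = lcomb (mv n A d) (std_basis p) n" for d
    unfolding e_def lcomb_comp mv_def ..
  have "\<forall>j<n. e j \<in> std_lattice p"
    unfolding e_def n_def std_lattice_mem using AS unfolding Smat_def by auto
  moreover have "\<exists>c. (\<forall>j<n. vge 0 (c j)) \<and> vdiff w (lcomb c e n) \<in> lT l (std_lattice p)"
    if w: "w \<in> std_lattice p" for w
  proof -
    obtain c where c: "w = lcomb c (std_basis p) n" "\<forall>j<n. vge 0 (c j)"
      using w unfolding std_lattice_def n_def by auto
    have "\<forall>j<n. vge 0 (mv n B c j)" using Svec_mv[OF BS[folded n_def], of c] c(2) by (simp add: Svec_def)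
    moreover have "vdiff w (lcomb (mv n B c) e n) = lcomb (\<lambda>j. c j - mv n (matmul n A B) c j) (std_basis p) n"
      unfolding c ecomb lcomb_diff mv_mv ..
    moreover have "\<forall>j<n. vge 1 (c j - mv n (matmul n A B) c j)"
      using mv_Imat_cong[OF AB[folded n_def] c(2)] by blast
    ultimately show ?thesis by (intro exI[of _ "mv n B c"]) (simp add: n_def std_lattice_lT)
  qed
  moreover have "\<forall>j<n. vge 1 (d j)" if dS: "\<forall>j<n. vge 0 (d j)" and dl: "lcomb d e n \<in> lT l (std_lattice p)" for d
  proof -
    have "lcomb (mv n A d) (std_basis p) n \<in> lT l (std_lattice p)" using dl unfolding ecomb .
    then have "zero_mod n (mv n A d)" unfolding n_def std_lattice_lT zero_mod_def .
    then have "zero_mod n (mv n B (mv n A d))" by (rule zero_mod_mv[OF BS[folded n_def]])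
    then have "zero_mod n (mv n (matmul n B A) d)" by (simp only: mv_mv)
    then show ?thesis using mv_Imat_cong[OF BA[folded n_def] dS] unfolding zero_mod_def
      by (metis diff_add_cancel vge_add)
  qed
  ultimately show ?thesis unfolding quot_basis_def inS_iff inlS_iff e_def n_def by blast
qed

lemma std_lattice_transported_action:
  assumes AS: "Smat (2*r) (2*r) A" and pr: "2*p \<le> 2*r" and G: "2*p < 2*r \<Longrightarrow> vge 2 pb"
    and JA: "mcong (2*r) (2*r) (matmul (2*r) (jordan2 p) A) (matmul (2*r) A N)"
  shows "acts_by_matrix l P (std_lattice p) (2*r) (\<lambda>j. lcomb (\<lambda>i. A i j) (std_basis p) (2*r)) N"
  unfolding acts_by_matrix_def
proof (intro allI impI)
  fix j assume j: "j < 2*r"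
  let ?a = "\<lambda>i. A i j"
  have cA: "\<forall>i<2*r. vge 0 (A i j)" using AS j unfolding Smat_def by auto
  have "vdiff (xact P (lcomb ?a (std_basis p) (2*r))) (lcomb (\<lambda>i. N i j) (\<lambda>j. lcomb (\<lambda>i. A i j) (std_basis p) (2*r)) (2*r))
      = lcomb (\<lambda>i. std_xcoords p ?a i - mv (2*r) A (\<lambda>i. N i j) i) (std_basis p) (2*r)"
    unfolding lcomb_comp xact_std_basis lcomb_diff mv_def ..
  moreover have "vge 1 (std_xcoords p ?a i - mv (2*r) A (\<lambda>i. N i j) i)" if i: "i < 2*r" for i
  proof -
    have "vge 1 (std_xcoords p ?a i - mv (2*r) (jordan2 p) ?a i)"
      using std_xcoords_cong[OF cA pr G i] .
    moreover have "vge 1 (mv (2*r) (jordan2 p) ?a i - mv (2*r) A (\<lambda>i. N i j) i)"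
      using JA i j unfolding mcong_def mv_def matmul_def by simp
    ultimately show ?thesis using vge_add by fastforce
  qed
  ultimately show "vdiff (xact P (lcomb ?a (std_basis p) (2*r)))
      (lcomb (\<lambda>i. N i j) (\<lambda>j. lcomb (\<lambda>i. A i j) (std_basis p) (2*r)) (2*r)) \<in> lT l (std_lattice p)"
    by (simp add: std_lattice_lT)
qed

lemma std_lattice_realizes:
  assumes pq: "2*p + q = 2*r" and G: "q > 0 \<Longrightarrow> vge 2 pb" and NS: "Smat (2*r) (2*r) N"
    and AS: "Smat (2*r) (2*r) A" and BS: "Smat (2*r) (2*r) B"
    and AB: "mcong (2*r) (2*r) (matmul (2*r) A B) Imat"
    and ANB: "mcong (2*r) (2*r) (matmul (2*r) (matmul (2*r) A N) B) (jordan2 p)"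
  shows "\<exists>T. is_lattice v P r T \<and> x_stable P T \<and>
           (\<exists>e. quot_basis l v T (2*r) e \<and> acts_by_matrix l P T (2*r) e N)"
proof -
  define n where "n = 2*r"
  have BA: "mcong n n (matmul n B A) Imat" using inv_swap[OF AS BS AB] by (simp add: n_def)
  have "mcong n n (matmul n (jordan2 p) A) (matmul n (matmul n (matmul n A N) B) A)"
    using mcong_mult_left[OF AS Smat_mult[OF Smat_mult[OF AS NS] BS] mcong_sym[OF ANB]] by (simp add: n_def)
  also have "mcong n n \<dots> (matmul n (matmul n A N) Imat)"
    using mcong_mult_right[OF Smat_mult[OF BS AS] Smat_mult[OF AS NS] BA[unfolded n_def]]
    by (simp add: matmul_assoc n_def)
  also have "mcong n n \<dots> (matmul n A N)" by (rule matmul_Im_right)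
  finally have JA: "mcong n n (matmul n (jordan2 p) A) (matmul n A N)" .
  show ?thesis
    using std_lattice_lattice std_lattice_stable std_lattice_transported_basis[OF AS BS AB BA[unfolded n_def]]
      std_lattice_transported_action[OF AS _ _ JA[unfolded n_def]] pq G by fastforce
qed

end

context quadratic_setting
begin

lemma coeffP: "coeff P 0 = pb" "coeff P 1 = pa" "coeff P 2 = 1" "k \<ge> 3 \<Longrightarrow> coeff P k = 0"
  using Pform degP by (auto simp: coeff_eq_0 numeral_2_eq_2)

text \<open>The coefficients of P lie above the line y / c for c = 2, and also for c = 1 when
  v(pb) >= 2; the bound passes to P^r and gives Np(P^r) >= y / c.\<close>

lemma coeff_bound_P:
  assumes c: "c \<ge> 1" and b: "pb \<noteq> 0 \<Longrightarrow> 2 \<le> c * v pb"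
  shows "coeff_bound c P 2"
  unfolding coeff_bound_def
proof (intro allI impI)
  fix k assume nz: "coeff P k \<noteq> 0"
  have k3: "k < 3" using coeffP(4)[of k] nz by (cases "k \<ge> 3") auto
  then consider "k = 0" | "k = 1" | "k = 2" by linarith
  then show "int 2 - int k \<le> c * v (coeff P k)"
  proof cases
    case 1 then show ?thesis using b nz coeffP(1) by simp
  next
    case 2
    then have "pa \<noteq> 0" using nz coeffP(2) by simp
    then have "v pa \<ge> 1" using pal unfolding vge_def by simp
    then have "c * v pa \<ge> 1 * 1" using c by (intro mult_mono) auto
    then show ?thesis using 2 coeffP(2) by simp
  next
    case 3 then show ?thesis using coeffP(3) by simp
  qed
qed

lemma Np_lin:
  assumes c: "c \<ge> 1" and g: "coeff_bound c P 2" and y: "y \<in> {0..real (2*r)}"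
  shows "ereal (y / real_of_int c) \<le> Np v (P ^ r) (2*r) y"
proof (rule Np_lower)
  show "0 < real_of_int c" using c by simp
  show "y \<in> {0..real (2*r)}" by (rule y)
  have gp: "coeff_bound c (P ^ r) (2*r)" using coeff_bound_pow[OF _ g, of r] c by simp
  show "\<forall>i\<le>2*r. coeff (P ^ r) (2*r - i) \<noteq> 0 \<longrightarrow> real i / real_of_int c \<le> real_of_int (v (coeff (P ^ r) (2*r - i)))"
  proof (intro allI impI)
    fix i assume i: "i \<le> 2*r" and nz: "coeff (P ^ r) (2*r - i) \<noteq> 0"
    have "int (2*r) - int (2*r - i) \<le> c * v (coeff (P ^ r) (2*r - i))" using gp nz unfolding coeff_bound_def by blast
    then have "int i \<le> c * v (coeff (P ^ r) (2*r - i))" using i by simp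
    then have "real i \<le> real_of_int c * real_of_int (v (coeff (P ^ r) (2*r - i)))"
      by (metis of_int_le_iff of_int_mult of_int_of_nat_eq)
    then show "real i / real_of_int c \<le> real_of_int (v (coeff (P ^ r) (2*r - i)))"
      using c by (simp add: divide_le_eq mult.commute)
  qed
qed

lemma Np_top:
  assumes "pb \<noteq> 0" "v pb = 1"
  shows "Np v (P ^ r) (2*r) (real (2*r)) \<le> ereal (real r)"
proof -
  have c0: "coeff (P ^ r) 0 = pb ^ r" using coeffP(1) by (simp add: coeff_0_power)
  have "Np v (P ^ r) (2*r) (real (2*r)) \<le> ereal (real_of_int (v (coeff (P ^ r) 0)))"
    by (rule Np_upper) (use assms c0 in simp)
  also have "v (coeff (P ^ r) 0) = int r" using c0 vpow[OF assms(1), of r] assms(2) by simp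
  finally show ?thesis by simp
qed

text \<open>The Young polygon lies below the Newton polygon: with only 2-blocks when v(pb) = 1
  (both are then at most y/2), and in general when v(pb) >= 2 (Np(P^r) is then above y).\<close>

lemma polygon_bound_half:
  assumes "pb \<noteq> 0" "v pb = 1" and y: "y \<in> {0..real (2*r)}"
  shows "ereal (Hp (replicate r 2) y) \<le> Np v (P ^ r) (2*r) y"
proof -
  have g: "coeff_bound 2 P 2" by (rule coeff_bound_P) (use assms in auto)
  have "Hp (replicate r 2) y \<le> y / real_of_int 2" using Hp_rep2[of r y] y by simp
  then have "ereal (Hp (replicate r 2) y) \<le> ereal (y / real_of_int 2)" by simp
  also have "\<dots> \<le> Np v (P ^ r) (2*r) y" by (rule Np_lin[OF _ g y]) simp
  finally show ?thesis .
qed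

lemma polygon_bound_one:
  assumes pb: "\<not> (pb \<noteq> 0 \<and> v pb = 1)" and ms: "\<forall>m\<in>set ms. 1 \<le> m" and y: "y \<in> {0..real (2*r)}"
  shows "ereal (Hp ms y) \<le> Np v (P ^ r) (2*r) y"
proof -
  have g: "coeff_bound 1 P 2"
  proof (rule coeff_bound_P)
    assume "pb \<noteq> 0"
    then have "v pb \<ge> 1" "v pb \<noteq> 1" using pbl pb unfolding vge_def by auto
    then show "2 \<le> 1 * v pb" by simp
  qed simp
  have "Hp ms y \<le> y / real_of_int 1" using Hp_le[OF ms, of y] y by simp
  then have "ereal (Hp ms y) \<le> ereal (y / real_of_int 1)" by simp
  also have "\<dots> \<le> Np v (P ^ r) (2*r) y" by (rule Np_lin[OF _ g y]) simp
  finally show ?thesis .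
qed

text \<open>Conversely, when v(pb) = 1 the polygon condition excludes blocks of size 1:
  at y = 2r it says that the number p + q of blocks is at most r = (2p + q)/2.\<close>

lemma polygon_excludes_1_blocks:
  assumes pq: "2*p + q = 2*r" and q0: "q > 0" and pb: "pb \<noteq> 0" "v pb = 1"
    and hp: "\<forall>y\<in>{0..real (2*r)}. ereal (Hp (replicate p 2 @ replicate q 1) y) \<le> Np v (P ^ r) (2*r) y"
  shows False
proof -
  let ?ms = "replicate p 2 @ replicate q (1::nat)"
  have ms1: "\<forall>m\<in>set ?ms. 1 \<le> m" by auto
  have msum: "sum_list ?ms = 2*r" using pq by (simp add: sum_list_replicate)
  have "ereal (Hp ?ms (real (2*r))) \<le> Np v (P ^ r) (2*r) (real (2*r))" using hp by simp
  also have "\<dots> \<le> ereal (real r)" by (rule Np_top[OF pb])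
  finally have "Hp ?ms (real (2*r)) \<le> real r" by simp
  moreover have "Hp ?ms (real (2*r)) = real (length ?ms)" using Hp_total[OF ms1] unfolding msum .
  ultimately show False using pq q0 by simp
qed

lemma lattice_implies_polygon:
  assumes NS: "Smat (2*r) (2*r) N" and lat: "is_lattice v P r T" and xs: "x_stable P T"
    and qb: "quot_basis l v T (2*r) e" and am: "acts_by_matrix l P T (2*r) e N"
  shows "\<exists>ms. jordan_type l v (2*r) N ms \<and> (\<forall>y\<in>{0..real (2*r)}. ereal (Hp ms y) \<le> Np v (P ^ r) (2*r) y)
     \<and> (\<forall>m\<in>set ms. 1 / real m = 1 / 2 \<or> 1 / real m = 1)"
proof -
  have S: "S_submodule T" by (rule lattice_S_submodule[OF lat])
  have eT: "\<forall>j<2*r. e j \<in> T"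
    and span: "\<forall>w\<in>T. \<exists>c. (\<forall>j<2*r. vge 0 (c j)) \<and> vdiff w (lcomb c e (2*r)) \<in> lT l T"
    and ind: "\<forall>c. (\<forall>j<2*r. vge 0 (c j)) \<and> lcomb c e (2*r) \<in> lT l T \<longrightarrow> (\<forall>j<2*r. vge 1 (c j))"
    using qb unfolding quot_basis_def inS_iff inlS_iff by blast+
  have NN: "mcong (2*r) (2*r) (matmul (2*r) N N) (\<lambda>_ _. 0)" by (rule matrix_square_zero[OF S xs eT am ind NS])
  obtain p q A B where pq: "2*p + q = 2*r" and conj: "Smat (2*r) (2*r) A" "Smat (2*r) (2*r) B"
      "mcong (2*r) (2*r) (matmul (2*r) A B) Imat" "mcong (2*r) (2*r) (matmul (2*r) (matmul (2*r) A N) B) (jordan2 p)"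
    and KI: "ker_in_image (2*r) N \<longrightarrow> q = 0"
    using square_zero_normal_form[OF NS NN] by blast
  define ms where "ms = replicate p (2::nat) @ replicate q 1"
  have jt: "jordan_type l v (2*r) N ms" unfolding ms_def jordan_type_12[OF pq] using conj by blast
  have "ereal (Hp ms y) \<le> Np v (P ^ r) (2*r) y" if y: "y \<in> {0..real (2*r)}" for y
  proof (cases "pb \<noteq> 0 \<and> v pb = 1")
    case True
    then have "q = 0" using KI matrix_ker_in_image[OF S xs eT am ind span NS] by blast
    then have "ms = replicate r 2" using pq unfolding ms_def by simp
    then show ?thesis using polygon_bound_half[OF _ _ y] True by simp
  next
    case False
    have "\<forall>m\<in>set ms. 1 \<le> m" unfolding ms_def by auto
    then show ?thesis by (rule polygon_bound_one[OF False _ y])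
  qed
  moreover have "\<forall>m\<in>set ms. 1 / real m = 1 / 2 \<or> 1 / real m = 1" unfolding ms_def by auto
  ultimately show ?thesis using jt by blast
qed

lemma polygon_implies_lattice:
  assumes NS: "Smat (2*r) (2*r) N" and jt: "jordan_type l v (2*r) N ms"
    and hp: "\<forall>y\<in>{0..real (2*r)}. ereal (Hp ms y) \<le> Np v (P ^ r) (2*r) y"
    and sl: "\<forall>m\<in>set ms. 1 / real m = 1 / 2 \<or> 1 / real m = 1"
  shows "\<exists>T. is_lattice v P r T \<and> x_stable P T \<and> (\<exists>e. quot_basis l v T (2*r) e \<and> acts_by_matrix l P T (2*r) e N)"
proof -
  obtain p q where msf: "ms = replicate p 2 @ replicate q 1"
    using slopes_12_shape[OF _ sl] jt unfolding jordan_type_def by blast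
  have pq: "2*p + q = 2*r" using jt unfolding jordan_type_def msf by (simp add: sum_list_replicate)
  obtain A B where conj: "Smat (2*r) (2*r) A" "Smat (2*r) (2*r) B"
      "mcong (2*r) (2*r) (matmul (2*r) A B) Imat" "mcong (2*r) (2*r) (matmul (2*r) (matmul (2*r) A N) B) (jordan2 p)"
    using jt unfolding msf jordan_type_12[OF pq] by blast
  have "vge 2 pb" if "q > 0"
    using polygon_excludes_1_blocks[OF pq that _ _ hp[unfolded msf]] pbl unfolding vge_def by force
  then show ?thesis using std_lattice_realizes[OF pq _ NS conj] by blast
qed

end

theorem mainTheorem7:
  fixes l r :: nat and v :: "'k::field \<Rightarrow> int" and P :: "'k poly"
    and N :: "nat \<Rightarrow> nat \<Rightarrow> 'k"
  assumes L: "unram_ext_Ql l v"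
    and P_deg: "degree P = 2" and P_monic: "lead_coeff P = 1"
    and P_S: "\<forall>i. inS v (coeff P i)"
    and P_sep: "coprime P (pderiv P)"
    and P_mod: "inlS l v (coeff P 0) \<and> inlS l v (coeff P 1)"
    and r: "r \<ge> 1"
    and N_S: "S_matrix v (2 * r) N"
    and N_nil: "nilpotent_mod l v (2 * r) N"
  shows "(\<exists>T. is_lattice v P r T \<and> x_stable P T \<and>
            (\<exists>e. quot_basis l v T (2 * r) e \<and> acts_by_matrix l P T (2 * r) e N))
         \<longleftrightarrow>
         (\<exists>ms. jordan_type l v (2 * r) N ms \<and>
            (\<forall>y\<in>{0..real (2 * r)}. ereal (Hp ms y) \<le> Np v (P ^ r) (2 * r) y) \<and>
            (\<forall>m\<in>set ms. 1 / real m = 1 / 2 \<or> 1 / real m = 1))"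
proof -
  interpret valued_field l v by (rule valued_field_of_unram[OF L])
  have Pf: "P = [:coeff P 0, coeff P 1, 1:]" by (rule P_form[OF P_deg P_monic])
  interpret quadratic_setting l v P r "coeff P 0" "coeff P 1"
    by unfold_locales (use Pf P_mod in auto)
  have NS: "Smat (2*r) (2*r) N" using N_S S_matrix_iff by simp
  show ?thesis using lattice_implies_polygon[OF NS] polygon_implies_lattice[OF NS] by blast
qed

end
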